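(* Let $\mu\in\mathbb{N}$ and let $A\subset\mathbb{R}^{\alpha}$ be open. Let $(x,y,a)\mapsto U_a(x,y)$ be analytic on $[-1,1]^2\times A$, with $U_a(0,0)>0$ for every $a\in A$ and such that, for each $a\in A$, the Taylor series of $U_a$ at $(0,0)$ converges absolutely on $[-1,1]^2$. Let $(x,a)\mapsto V_a(x)$ be analytic on $[-1,1]\times A$ with $V_a(x)>0$ for all $(x,a)\in[-1,1]\times A$. For $\varepsilon\approx 0$ consider the family of vector fields \[ X=\frac{1}{xU_a(x,y)}\Big(x(x^\mu-\varepsilon)\partial_x-V_a(x)\,y\,\partial_y\Big). \] Let $\vartheta_\varepsilon$ denote the largest real root of $x(x^\mu-\varepsilon)=0$, i.e. $\vartheta_\varepsilon=0$ if $\varepsilon\le 0$ and $\vartheta_\varepsilon=\varepsilon^{1/\mu}$ if $\varepsilon\ge 0$. For $s>0$ small, let $\mathcal{T}(s;\varepsilon,a)$ be the time that the trajectory of $X$ starting at the point $(s+\vartheta_\varepsilon,1)\in\{y=1\}$ takes to reach the transverse section $\{x=1\}$ (the Dulac time between $\{y=1\}$ and $\{x=1\}$). Then \[ \lim_{(s,\varepsilon)\to(0^+,0)}\partial_s\mathcal{T}(s;\varepsilon,a)=-\infty \] uniformly with respect to $a$ on every compact subset of $A$.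
   Context: The point $(\vartheta_\varepsilon,0)$ is a hyperbolic saddle of $X$ for $\varepsilon\neq0$ and the family unfolds a saddle-node at $\varepsilon=0$. Equivalently, if $y=y(x;s)$ denotes the trajectory of $x(x^\mu-\varepsilon)\partial_x-V_a(x)y\partial_y$ with $y(s+\vartheta_\varepsilon;s)=1$, then $\mathcal{T}(s;\varepsilon,a)=\int_{s+\vartheta_\varepsilon}^1 \frac{U_a(x,y(x;s))}{x^\mu-\varepsilon}\,dx$ for $s\in(0,s_0]$, $|\varepsilon|\le\varepsilon_0$ with $s_0,\varepsilon_0>0$ small. *)

theory Defs
  imports "HOL-Analysis.Analysis"
begin

definition multi_indices :: "('e::euclidean_space \<Rightarrow> nat) set" where
  "multi_indices = {k. \<forall>b. b \<notin> Basis \<longrightarrow> k b = 0}"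

definition monomial :: "('e::euclidean_space \<Rightarrow> nat) \<Rightarrow> 'e \<Rightarrow> real" where
  "monomial k v = (\<Prod>b\<in>Basis. (v \<bullet> b) ^ k b)"

definition real_analytic_on :: "('e::euclidean_space \<Rightarrow> real) \<Rightarrow> 'e set \<Rightarrow> bool" where
  "real_analytic_on f S \<longleftrightarrow>
     (\<forall>p\<in>S. \<exists>r>0. \<exists>c::('e \<Rightarrow> nat) \<Rightarrow> real. \<forall>v\<in>ball p r.
        ((\<lambda>k. c k * monomial k (v - p)) has_sum f v) multi_indices)"

text \<open>Largest real root of x (x^mu - eps) = 0.\<close>
definition theta :: "nat \<Rightarrow> real \<Rightarrow> real" where
  "theta \<mu> \<epsilon> = (if \<epsilon> \<le> 0 then 0 else root \<mu> \<epsilon>)"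

text \<open>The orbit y = y(x;s) of  x(x^mu - eps) d/dx - V(x) y d/dy  through (s + theta, 1),
  written as a graph over x on [s + theta, 1] (orbit equation dy/dx = -V y / (x(x^mu-eps))).\<close>
definition orbit_y :: "nat \<Rightarrow> (real \<Rightarrow> real) \<Rightarrow> real \<Rightarrow> real \<Rightarrow> real \<Rightarrow> real" where
  "orbit_y \<mu> V \<epsilon> s x = (THE v. \<exists>y. y (s + theta \<mu> \<epsilon>) = 1 \<and>
      (\<forall>t\<in>{s + theta \<mu> \<epsilon>..1}.
         (y has_real_derivative (- V t * y t / (t * (t ^ \<mu> - \<epsilon>)))) (at t within {s + theta \<mu> \<epsilon>..1}))
      \<and> y x = v)"

definition dulac_time :: "nat \<Rightarrow> (real \<Rightarrow> real \<Rightarrow> real) \<Rightarrow> (real \<Rightarrow> real) \<Rightarrow> real \<Rightarrow> real \<Rightarrow> real" where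
  "dulac_time \<mu> U V \<epsilon> s =
     integral {s + theta \<mu> \<epsilon>..1} (\<lambda>x. U x (orbit_y \<mu> V \<epsilon> s x) / (x ^ \<mu> - \<epsilon>))"

end

theory Submission
  imports Defs
begin

text \<open>Write \<open>u = s + \<vartheta>\<^sub>\<epsilon>\<close>. The trajectory is \<open>y(x) = exp (- \<integral>\<^sub>u\<^sup>x V / (t (t\<^sup>\<mu> - \<epsilon>)))\<close>, so the
  Dulac time is \<open>\<integral>\<^sub>u\<^sup>1 U(x, y(x)) / (x\<^sup>\<mu> - \<epsilon>) dx\<close>, an integral whose lower limit and integrand
  both move with \<open>u\<close>. Its derivative is \<open>-U(u, 1) / (u\<^sup>\<mu> - \<epsilon>)\<close> plus an integral; integrating
  the part of that integral with \<open>x\<close> frozen at \<open>u\<close> by parts leaves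
  \<open>(-U(u, y(1)) + O(\<eta> + 1/k + u/r\<^sup>k)) / (u\<^sup>\<mu> - \<epsilon>)\<close>, where \<open>\<eta>\<close> measures the continuity of
  \<open>\<partial>\<^sub>yU / V\<close> in \<open>x\<close>, and \<open>V \<ge> v\<^sub>0\<close> forces \<open>y(x) \<le> (u / x)\<^sup>k\<close> for \<open>x \<le> r\<close>. As \<open>y(1) \<rightarrow> 0\<close> and
  \<open>U(0, 0) > 0\<close> uniformly on compact parameter sets, the numerator stays below a negative
  constant while \<open>u\<^sup>\<mu> - \<epsilon> \<rightarrow> 0\<close>.\<close>

section \<open>Power series and real analytic functions\<close>

lemma abs_infsum_le_infsum:
  fixes f :: "'a \<Rightarrow> real"
  assumes g: "g summable_on I" and fg: "\<And>k. k \<in> I \<Longrightarrow> \<bar>f k\<bar> \<le> g k"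
  shows "f summable_on I" and "\<bar>infsum f I\<bar> \<le> infsum g I"
proof -
  have fg': "norm (f k) \<le> g k" if "k \<in> I" for k using fg[OF that] by simp
  have abs: "(\<lambda>k. norm (f k)) summable_on I"
    using Infinite_Sum.abs_summable_on_comparison_test'[OF g fg'] .
  then show "f summable_on I" by (rule abs_summable_summable)
  have "norm (infsum f I) \<le> infsum (\<lambda>k. norm (f k)) I"
    using abs by (rule norm_infsum_bound)
  also have "\<dots> \<le> infsum g I"
    using abs g fg' by (rule infsum_mono)
  finally show "\<bar>infsum f I\<bar> \<le> infsum g I" by simp
qed

lemma infsum_tail_less:
  fixes g :: "'a \<Rightarrow> real"
  assumes g: "g summable_on I" and e: "e > 0"
  obtains F0 where "finite F0" "F0 \<subseteq> I" "infsum g (I - F0) < e"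
proof -
  have "(sum g \<longlongrightarrow> infsum g I) (finite_subsets_at_top I)"
    using g by (simp add: has_sum_def[symmetric] has_sum_infsum)
  then have "eventually (\<lambda>X. dist (sum g X) (infsum g I) < e) (finite_subsets_at_top I)"
    using e by (intro tendstoD) auto
  then obtain F0 where F0: "finite F0" "F0 \<subseteq> I" "dist (sum g F0) (infsum g I) < e"
    unfolding eventually_finite_subsets_at_top by blast
  have "infsum g (I - F0) = infsum g I - sum g F0"
    using infsum_Diff[OF g summable_on_finite[OF F0(1)] F0(2)] infsum_finite[OF F0(1)] by simp
  with F0 show ?thesis by (intro that) (auto simp: dist_real_def)
qed

lemma tendsto_infsum_dominated:
  fixes f :: "'x \<Rightarrow> 'k \<Rightarrow> real" and g :: "'k \<Rightarrow> real"
  assumes g: "g summable_on I"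
    and bnd: "eventually (\<lambda>x. \<forall>k\<in>I. \<bar>f x k\<bar> \<le> g k) F"
    and lim: "\<And>k. k \<in> I \<Longrightarrow> ((\<lambda>x. f x k) \<longlongrightarrow> l k) F"
  shows "((\<lambda>x. infsum (f x) I) \<longlongrightarrow> infsum l I) F"
proof (cases "F = bot")
  case True
  then show ?thesis by simp
next
  case False
  have lb: "\<bar>l k\<bar> \<le> g k" if "k \<in> I" for k
  proof -
    have "((\<lambda>x. \<bar>f x k\<bar>) \<longlongrightarrow> \<bar>l k\<bar>) F" using lim[OF that] by (intro tendsto_intros)
    moreover have "eventually (\<lambda>x. \<bar>f x k\<bar> \<le> g k) F" using bnd that by (auto elim: eventually_mono)
    ultimately show ?thesis using False by (intro tendsto_upperbound) auto
  qed
  show ?thesis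
  proof (rule tendstoI)
    fix e :: real assume e: "e > 0"
    obtain F0 where F0: "finite F0" "F0 \<subseteq> I" and tail: "infsum g (I - F0) < e/3"
      using infsum_tail_less[OF g, of "e/3"] e by auto
    have gs: "g summable_on (I - F0)" using g by (rule summable_on_subset_banach) auto
    have split: "infsum h I = (\<Sum>k\<in>F0. h k) + infsum h (I - F0)"
      if "\<And>k. k \<in> I \<Longrightarrow> \<bar>h k\<bar> \<le> g k" for h
      using infsum_Diff[OF abs_infsum_le_infsum(1)[OF g that] summable_on_finite[OF F0(1)] F0(2)]
      by (simp add: infsum_finite[OF F0(1)])
    have tail_le: "\<bar>infsum h (I - F0)\<bar> \<le> infsum g (I - F0)"
      if "\<And>k. k \<in> I \<Longrightarrow> \<bar>h k\<bar> \<le> g k" for h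
      using abs_infsum_le_infsum(2)[OF gs, of h] that by auto
    have "((\<lambda>x. \<Sum>k\<in>F0. f x k) \<longlongrightarrow> (\<Sum>k\<in>F0. l k)) F"
      using lim F0(2) by (intro tendsto_sum) auto
    then have "eventually (\<lambda>x. dist (\<Sum>k\<in>F0. f x k) (\<Sum>k\<in>F0. l k) < e/3) F"
      using e by (intro tendstoD) auto
    then show "eventually (\<lambda>x. dist (infsum (f x) I) (infsum l I) < e) F"
      using bnd
    proof eventually_elim
      case (elim x)
      then have fx: "\<And>k. k \<in> I \<Longrightarrow> \<bar>f x k\<bar> \<le> g k" by blast
      have "infsum (f x) I - infsum l I
          = ((\<Sum>k\<in>F0. f x k) - (\<Sum>k\<in>F0. l k)) + infsum (f x) (I - F0) - infsum l (I - F0)"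
        using split[OF fx] split[OF lb] by simp
      then have "\<bar>infsum (f x) I - infsum l I\<bar>
          \<le> \<bar>(\<Sum>k\<in>F0. f x k) - (\<Sum>k\<in>F0. l k)\<bar> + \<bar>infsum (f x) (I - F0)\<bar> + \<bar>infsum l (I - F0)\<bar>"
        by linarith
      also have "\<dots> < e/3 + e/3 + e/3"
        using elim(1) tail tail_le[OF fx] tail_le[OF lb] by (simp add: dist_real_def)
      finally show ?case by (simp add: dist_real_def)
    qed
  qed
qed

lemma abs_power_diff_le:
  fixes x y R :: real
  assumes "\<bar>x\<bar> \<le> R" "\<bar>y\<bar> \<le> R"
  shows "\<bar>x ^ m - y ^ m\<bar> \<le> real m * R ^ (m - 1) * \<bar>x - y\<bar>"
proof (cases m)
  case 0
  then show ?thesis by simp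
next
  case (Suc n)
  have "\<bar>\<Sum>p<Suc n. x ^ p * y ^ (n - p)\<bar> \<le> (\<Sum>p<Suc n. \<bar>x\<bar> ^ p * \<bar>y\<bar> ^ (n - p))"
    by (rule order_trans[OF sum_abs]) (simp add: abs_mult power_abs)
  also have "\<dots> \<le> (\<Sum>p<Suc n. R ^ p * R ^ (n - p))"
    using assms by (intro sum_mono mult_mono power_mono) auto
  also have "\<dots> = real (Suc n) * R ^ n"
    by (simp add: power_add[symmetric])
  finally have "\<bar>x - y\<bar> * \<bar>\<Sum>p<Suc n. x ^ p * y ^ (n - p)\<bar> \<le> \<bar>x - y\<bar> * (real (Suc n) * R ^ n)"
    by (intro mult_left_mono) auto
  then show ?thesis
    using Suc by (subst (asm) abs_mult[symmetric], subst (asm) diff_power_eq_sum[symmetric]) (simp add: mult_ac)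
qed

lemma of_nat_mult_three_quarters_power_le: "real n * (3/4::real) ^ (n - 1) \<le> 3"
proof (cases n)
  case 0
  then show ?thesis by simp
next
  case (Suc m)
  have "1 + real m * (1/3) \<le> (1 + 1/3::real) ^ m"
    by (rule Bernoulli_inequality) auto
  then have "real m + 3 \<le> 3 * (4/3::real) ^ m" by (simp add: field_simps)
  then have "real m + 1 \<le> 3 * (4/3::real) ^ m" by linarith
  then have "(real m + 1) * (3/4::real) ^ m \<le> 3 * ((4/3) ^ m * (3/4) ^ m)"
    by (metis mult.assoc mult_right_mono zero_le_divide_iff zero_le_numeral zero_le_power)
  also have "(4/3::real) ^ m * (3/4) ^ m = 1" by (simp add: power_mult_distrib[symmetric])
  finally show ?thesis using Suc by (simp add: add.commute)
qed

definition monomial_except :: "'e::euclidean_space \<Rightarrow> ('e \<Rightarrow> nat) \<Rightarrow> 'e \<Rightarrow> real" where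
  "monomial_except b k z = (\<Prod>b'\<in>Basis - {b}. (z \<bullet> b') ^ k b')"

definition monomial_deriv :: "'e::euclidean_space \<Rightarrow> ('e \<Rightarrow> nat) \<Rightarrow> 'e \<Rightarrow> real" where
  "monomial_deriv b k z = real (k b) * (z \<bullet> b) ^ (k b - 1) * monomial_except b k z"

lemma monomial_add_scaleR_Basis:
  fixes b :: "'e::euclidean_space"
  assumes b: "b \<in> Basis"
  shows "monomial k (z + t *\<^sub>R b) = (z \<bullet> b + t) ^ k b * monomial_except b k z"
proof -
  have "monomial k (z + t *\<^sub>R b) =
      ((z + t *\<^sub>R b) \<bullet> b) ^ k b * (\<Prod>b'\<in>Basis - {b}. ((z + t *\<^sub>R b) \<bullet> b') ^ k b')"
    unfolding monomial_def using b by (simp add: prod.remove)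
  also have "(\<Prod>b'\<in>Basis - {b}. ((z + t *\<^sub>R b) \<bullet> b') ^ k b') = monomial_except b k z"
    unfolding monomial_except_def using b by (intro prod.cong) (auto simp: inner_add_left inner_Basis)
  finally show ?thesis using b by (simp add: inner_add_left)
qed

lemma has_real_derivative_monomial_along_Basis:
  fixes b :: "'e::euclidean_space"
  assumes "b \<in> Basis"
  shows "((\<lambda>t. monomial k (z + t *\<^sub>R b)) has_real_derivative monomial_deriv b k z) (at 0)"
  unfolding monomial_add_scaleR_Basis[OF assms] monomial_deriv_def
  by (auto intro!: derivative_eq_intros)

lemma abs_monomial_le:
  fixes z :: "'e::euclidean_space"
  assumes "\<And>b. b \<in> Basis \<Longrightarrow> \<bar>z \<bullet> b\<bar> \<le> \<rho>"
  shows "\<bar>monomial k z\<bar> \<le> \<rho> ^ (\<Sum>b\<in>Basis. k b)"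
proof -
  have "\<bar>monomial k z\<bar> = (\<Prod>b\<in>Basis. \<bar>z \<bullet> b\<bar> ^ k b)"
    unfolding monomial_def by (simp add: abs_prod power_abs)
  also have "\<dots> \<le> (\<Prod>b\<in>Basis. \<rho> ^ k b)"
    using assms by (intro prod_mono) (auto intro: power_mono)
  finally show ?thesis by (simp add: power_sum)
qed

lemma abs_monomial_except_le:
  fixes z :: "'e::euclidean_space"
  assumes "\<And>b. b \<in> Basis \<Longrightarrow> \<bar>z \<bullet> b\<bar> \<le> \<rho>"
  shows "\<bar>monomial_except b k z\<bar> \<le> \<rho> ^ (\<Sum>b'\<in>Basis - {b}. k b')"
proof -
  have "\<bar>monomial_except b k z\<bar> = (\<Prod>b'\<in>Basis - {b}. \<bar>z \<bullet> b'\<bar> ^ k b')"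
    unfolding monomial_except_def by (simp add: abs_prod power_abs)
  also have "\<dots> \<le> (\<Prod>b'\<in>Basis - {b}. \<rho> ^ k b')"
    using assms by (intro prod_mono) (auto intro: power_mono)
  finally show ?thesis by (simp add: power_sum)
qed

lemma monomial_deriv_majorant:
  fixes b z :: "'e::euclidean_space"
  assumes b: "b \<in> Basis" and \<rho>: "\<rho> > 0" and z: "\<And>b'. b' \<in> Basis \<Longrightarrow> \<bar>z \<bullet> b'\<bar> \<le> \<rho>"
    and R: "0 \<le> R" "R \<le> 3 * \<rho> / 4"
  shows "real (k b) * R ^ (k b - 1) * \<bar>monomial_except b k z\<bar> \<le> 3 / \<rho> * \<rho> ^ (\<Sum>b'\<in>Basis. k b')"
proof (cases "k b")
  case 0
  then show ?thesis using \<rho> by simp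
next
  case (Suc n)
  have "real (k b) * R ^ (k b - 1) \<le> real (k b) * (3 * \<rho> / 4) ^ (k b - 1)"
    using R by (intro mult_left_mono power_mono) auto
  also have "\<dots> = (real (k b) * (3/4) ^ (k b - 1)) * \<rho> ^ n"
    using Suc by (simp add: power_mult_distrib[symmetric] mult_ac)
  also have "\<dots> \<le> 3 * \<rho> ^ n"
    using of_nat_mult_three_quarters_power_le[of "k b"] \<rho> by (intro mult_right_mono) auto
  finally have A: "real (k b) * R ^ (k b - 1) \<le> 3 * \<rho> ^ n" .
  have "real (k b) * R ^ (k b - 1) * \<bar>monomial_except b k z\<bar>
      \<le> 3 * \<rho> ^ n * \<rho> ^ (\<Sum>b'\<in>Basis - {b}. k b')"
    using \<rho> by (intro mult_mono[OF A abs_monomial_except_le[OF z]]) auto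
  also have "\<dots> = 3 / \<rho> * \<rho> ^ (\<Sum>b'\<in>Basis. k b')"
    using \<rho> b Suc by (simp add: sum.remove power_add field_simps)
  finally show ?thesis .
qed

lemma abs_monomial_deriv_le:
  fixes b z :: "'e::euclidean_space"
  assumes b: "b \<in> Basis" and \<rho>: "\<rho> > 0" and z: "\<And>b'. b' \<in> Basis \<Longrightarrow> \<bar>z \<bullet> b'\<bar> \<le> \<rho> / 2"
  shows "\<bar>monomial_deriv b k z\<bar> \<le> 3 / \<rho> * \<rho> ^ (\<Sum>b'\<in>Basis. k b')"
proof -
  have "\<bar>monomial_deriv b k z\<bar> = real (k b) * \<bar>z \<bullet> b\<bar> ^ (k b - 1) * \<bar>monomial_except b k z\<bar>"
    unfolding monomial_deriv_def by (simp add: abs_mult power_abs)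
  also have "\<dots> \<le> 3 / \<rho> * \<rho> ^ (\<Sum>b'\<in>Basis. k b')"
  proof (rule monomial_deriv_majorant[OF b \<rho>])
    show "\<bar>z \<bullet> b'\<bar> \<le> \<rho>" if "b' \<in> Basis" for b' using z[OF that] \<rho> by linarith
    show "\<bar>z \<bullet> b\<bar> \<le> 3 * \<rho> / 4" using z[OF b] \<rho> by linarith
  qed simp
  finally show ?thesis .
qed

lemma abs_monomial_diff_le:
  fixes b z :: "'e::euclidean_space"
  assumes b: "b \<in> Basis" and \<rho>: "\<rho> > 0" and z: "\<And>b'. b' \<in> Basis \<Longrightarrow> \<bar>z \<bullet> b'\<bar> \<le> \<rho> / 2"
    and t: "\<bar>t\<bar> \<le> \<rho> / 4"
  shows "\<bar>monomial k (z + t *\<^sub>R b) - monomial k z\<bar> \<le> 3 / \<rho> * \<rho> ^ (\<Sum>b'\<in>Basis. k b') * \<bar>t\<bar>"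
proof -
  have monomial_diff_eq: "monomial k (z + t *\<^sub>R b) - monomial k z
      = ((z \<bullet> b + t) ^ k b - (z \<bullet> b) ^ k b) * monomial_except b k z"
  proof -
    have "monomial k z = (z \<bullet> b) ^ k b * monomial_except b k z"
      using monomial_add_scaleR_Basis[OF b, of k z 0] by simp
    then show ?thesis
      unfolding monomial_add_scaleR_Basis[OF b] by (simp only: left_diff_distrib)
  qed
  have "\<bar>(z \<bullet> b + t) ^ k b - (z \<bullet> b) ^ k b\<bar> \<le> real (k b) * (3 * \<rho> / 4) ^ (k b - 1) * \<bar>t\<bar>"
  proof -
    have "\<bar>z \<bullet> b + t\<bar> \<le> 3 * \<rho> / 4" "\<bar>z \<bullet> b\<bar> \<le> 3 * \<rho> / 4"
      using z[OF b] t \<rho> abs_triangle_ineq[of "z \<bullet> b" t] by linarith+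
    from abs_power_diff_le[OF this, of "k b"] show ?thesis by simp
  qed
  then have "\<bar>(z \<bullet> b + t) ^ k b - (z \<bullet> b) ^ k b\<bar> * \<bar>monomial_except b k z\<bar>
      \<le> real (k b) * (3 * \<rho> / 4) ^ (k b - 1) * \<bar>t\<bar> * \<bar>monomial_except b k z\<bar>"
    by (rule mult_right_mono) simp
  also have "\<dots> = real (k b) * (3 * \<rho> / 4) ^ (k b - 1) * \<bar>monomial_except b k z\<bar> * \<bar>t\<bar>"
    by (simp only: mult_ac)
  also have "\<dots> \<le> 3 / \<rho> * \<rho> ^ (\<Sum>b'\<in>Basis. k b') * \<bar>t\<bar>"
  proof (intro mult_right_mono monomial_deriv_majorant[OF b \<rho>])
    show "\<bar>z \<bullet> b'\<bar> \<le> \<rho>" if "b' \<in> Basis" for b' using z[OF that] \<rho> by linarith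
  qed (use \<rho> in auto)
  finally show ?thesis
    unfolding monomial_diff_eq abs_mult .
qed

lemma Basis_inner_le_radius:
  fixes v p :: "'e::euclidean_space"
  assumes "b \<in> Basis" and "v \<in> ball p \<rho>"
  shows "\<bar>(v - p) \<bullet> b\<bar> \<le> \<rho>"
proof -
  have "norm (v - p) < \<rho>" using assms(2) by (simp add: dist_norm norm_minus_commute)
  then show ?thesis using Basis_le_norm[OF assms(1), of "v - p"] by linarith
qed

text \<open>Summability at the corner point \<open>p + \<rho> (1, \<dots>, 1)\<close> of the ball of convergence gives a
  majorant that is uniform on the polydisc of radius \<open>\<rho>\<close>.\<close>

lemma power_series_majorant:
  fixes c :: "('e::euclidean_space \<Rightarrow> nat) \<Rightarrow> real"
  assumes r: "r > 0"
    and conv: "\<And>v. v \<in> ball p r \<Longrightarrow> (\<lambda>k. c k * monomial k (v - p)) summable_on multi_indices"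
  obtains \<rho> where "0 < \<rho>" "\<rho> < r"
    "(\<lambda>k. \<bar>c k\<bar> * \<rho> ^ (\<Sum>b\<in>Basis. k b)) summable_on multi_indices"
proof -
  define \<rho> where "\<rho> = r / (real DIM('e) + 1)"
  have \<rho>: "0 < \<rho>" "\<rho> * real DIM('e) < r" "\<rho> < r"
    using r unfolding \<rho>_def by (auto simp: field_simps)
  define q where "q = p + \<rho> *\<^sub>R (\<Sum>b\<in>(Basis::'e set). b)"
  have "norm (q - p) \<le> \<rho> * real DIM('e)"
    using norm_sum[of "\<lambda>b. b" "Basis::'e set"] \<rho>(1) by (simp add: q_def mult_left_mono)
  then have "q \<in> ball p r" using \<rho> by (simp add: dist_norm norm_minus_commute)
  moreover have "monomial k (q - p) = \<rho> ^ (\<Sum>b\<in>Basis. k b)" for k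
  proof -
    have "(q - p) \<bullet> b = \<rho>" if "b \<in> Basis" for b
      using that by (simp add: q_def inner_sum_left inner_Basis sum.delta)
    then show ?thesis unfolding monomial_def power_sum by (intro prod.cong) auto
  qed
  ultimately have "(\<lambda>k. c k * \<rho> ^ (\<Sum>b\<in>Basis. k b)) summable_on multi_indices"
    using conv[of q] by simp
  then have "(\<lambda>k. norm (c k * \<rho> ^ (\<Sum>b\<in>Basis. k b))) summable_on multi_indices"
    by (rule summable_on_iff_abs_summable_on_real[THEN iffD1])
  then show ?thesis using \<rho> by (intro that) (simp_all add: abs_mult)
qed

lemma power_series_isCont:
  fixes c :: "('e::euclidean_space \<Rightarrow> nat) \<Rightarrow> real"
  assumes \<rho>: "\<rho> > 0" and W: "(\<lambda>k. \<bar>c k\<bar> * \<rho> ^ (\<Sum>b\<in>Basis. k b)) summable_on multi_indices"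
  shows "isCont (\<lambda>v. infsum (\<lambda>k. c k * monomial k (v - p)) multi_indices) p"
  unfolding isCont_def
proof (rule tendsto_infsum_dominated[OF W])
  have "eventually (\<lambda>v. v \<in> ball p \<rho>) (at p)"
    using \<rho> by (intro eventually_at_in_open') auto
  then show "\<forall>\<^sub>F v in at p. \<forall>k\<in>multi_indices. \<bar>c k * monomial k (v - p)\<bar> \<le> \<bar>c k\<bar> * \<rho> ^ (\<Sum>b\<in>Basis. k b)"
    by eventually_elim
      (auto simp: abs_mult intro!: mult_left_mono abs_monomial_le Basis_inner_le_radius)
  show "((\<lambda>v. c k * monomial k (v - p)) \<longlongrightarrow> c k * monomial k (p - p)) (at p)" for k
    unfolding monomial_def by (intro tendsto_intros)
qed

lemma power_series_deriv_isCont: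
  fixes c :: "('e::euclidean_space \<Rightarrow> nat) \<Rightarrow> real"
  assumes b: "b \<in> Basis" and \<rho>: "\<rho> > 0"
    and W: "(\<lambda>k. \<bar>c k\<bar> * \<rho> ^ (\<Sum>b\<in>Basis. k b)) summable_on multi_indices"
  shows "isCont (\<lambda>v. infsum (\<lambda>k. c k * monomial_deriv b k (v - p)) multi_indices) p"
  unfolding isCont_def
proof (rule tendsto_infsum_dominated[OF summable_on_cmult_right[OF W, of "3 / \<rho>"]])
  have "eventually (\<lambda>v. v \<in> ball p (\<rho> / 2)) (at p)"
    using \<rho> by (intro eventually_at_in_open') auto
  then show "\<forall>\<^sub>F v in at p. \<forall>k\<in>multi_indices.
      \<bar>c k * monomial_deriv b k (v - p)\<bar> \<le> 3 / \<rho> * (\<bar>c k\<bar> * \<rho> ^ (\<Sum>b\<in>Basis. k b))"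
  proof eventually_elim
    case (elim v)
    have "\<bar>c k\<bar> * \<bar>monomial_deriv b k (v - p)\<bar> \<le> \<bar>c k\<bar> * (3 / \<rho> * \<rho> ^ (\<Sum>b\<in>Basis. k b))" for k
      using elim by (intro mult_left_mono abs_monomial_deriv_le[OF b \<rho>] Basis_inner_le_radius) auto
    then show ?case by (simp add: abs_mult mult_ac)
  qed
  show "((\<lambda>v. c k * monomial_deriv b k (v - p)) \<longlongrightarrow> c k * monomial_deriv b k (p - p)) (at p)" for k
    unfolding monomial_deriv_def monomial_except_def by (intro tendsto_intros)
qed

lemma power_series_summable_along_Basis:
  fixes c :: "('e::euclidean_space \<Rightarrow> nat) \<Rightarrow> real"
  assumes b: "b \<in> Basis"
    and W: "(\<lambda>k. \<bar>c k\<bar> * \<rho> ^ (\<Sum>b\<in>Basis. k b)) summable_on multi_indices"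
    and z: "\<And>b'. b' \<in> Basis \<Longrightarrow> \<bar>z \<bullet> b'\<bar> \<le> \<rho> / 2" and t: "\<bar>t\<bar> \<le> \<rho> / 4"
  shows "(\<lambda>k. c k * monomial k (z + t *\<^sub>R b)) summable_on multi_indices"
proof (rule abs_infsum_le_infsum(1)[OF W])
  have "\<bar>(z + t *\<^sub>R b) \<bullet> b'\<bar> \<le> \<rho>" if "b' \<in> Basis" for b'
  proof -
    have "(z + t *\<^sub>R b) \<bullet> b' = z \<bullet> b' + (if b' = b then t else 0)"
      using b that by (simp add: inner_add_left inner_Basis)
    then have "\<bar>(z + t *\<^sub>R b) \<bullet> b'\<bar> \<le> \<bar>z \<bullet> b'\<bar> + \<bar>t\<bar>"
      by (simp add: abs_triangle_ineq)
    then show ?thesis using z[OF that] t by linarith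
  qed
  then show "\<bar>c k * monomial k (z + t *\<^sub>R b)\<bar> \<le> \<bar>c k\<bar> * \<rho> ^ (\<Sum>b\<in>Basis. k b)" for k
    by (auto simp: abs_mult intro!: mult_left_mono abs_monomial_le)
qed

lemma power_series_has_partial_derivative:
  fixes c :: "('e::euclidean_space \<Rightarrow> nat) \<Rightarrow> real"
  assumes b: "b \<in> Basis" and \<rho>: "\<rho> > 0"
    and W: "(\<lambda>k. \<bar>c k\<bar> * \<rho> ^ (\<Sum>b\<in>Basis. k b)) summable_on multi_indices"
    and z: "\<And>b'. b' \<in> Basis \<Longrightarrow> \<bar>z \<bullet> b'\<bar> \<le> \<rho> / 2"
  shows "((\<lambda>t. infsum (\<lambda>k. c k * monomial k (z + t *\<^sub>R b)) multi_indices) has_real_derivative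
           infsum (\<lambda>k. c k * monomial_deriv b k z) multi_indices) (at 0)"
proof -
  define S where "S t = infsum (\<lambda>k. c k * monomial k (z + t *\<^sub>R b)) multi_indices" for t
  define Q where "Q t k = c k * (monomial k (z + t *\<^sub>R b) - monomial k z) / t" for t k
  have small: "eventually (\<lambda>t. t \<noteq> 0 \<and> \<bar>t\<bar> \<le> \<rho> / 4) (at (0::real))"
    unfolding eventually_at using \<rho> by (intro exI[of _ "\<rho> / 4"]) (auto simp: dist_real_def)
  have summable: "(\<lambda>k. c k * monomial k (z + t *\<^sub>R b)) summable_on multi_indices"
    if "\<bar>t\<bar> \<le> \<rho> / 4" for t
    using power_series_summable_along_Basis[OF b W z that] .
  have quotient: "(S t - S 0) / t = infsum (Q t) multi_indices" if "\<bar>t\<bar> \<le> \<rho> / 4" for t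
  proof -
    have "((\<lambda>k. c k * monomial k (z + t *\<^sub>R b) + - (c k * monomial k z)) has_sum S t + - S 0)
        multi_indices"
      using summable[OF that] summable[of 0] \<rho> unfolding S_def
      by (intro has_sum_add has_sum_uminus[THEN iffD2]) (auto simp: has_sum_infsum)
    then have "((\<lambda>k. c k * monomial k (z + t *\<^sub>R b) - c k * monomial k z) has_sum S t - S 0)
        multi_indices"
      by simp
    from has_sum_divide_const[OF this, of t] show ?thesis
      unfolding Q_def right_diff_distrib by (rule infsumI[symmetric])
  qed
  have "((\<lambda>t. infsum (Q t) multi_indices) \<longlongrightarrow> infsum (\<lambda>k. c k * monomial_deriv b k z) multi_indices) (at 0)"
  proof (rule tendsto_infsum_dominated[OF summable_on_cmult_right[OF W, of "3 / \<rho>"]])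
    show "\<forall>\<^sub>F t in at 0. \<forall>k\<in>multi_indices. \<bar>Q t k\<bar> \<le> 3 / \<rho> * (\<bar>c k\<bar> * \<rho> ^ (\<Sum>b\<in>Basis. k b))"
      using small
    proof eventually_elim
      case (elim t)
      then have t: "t \<noteq> 0" "\<bar>t\<bar> \<le> \<rho> / 4" by auto
      show ?case
      proof
        fix k
        have "\<bar>Q t k\<bar> = \<bar>c k\<bar> * \<bar>monomial k (z + t *\<^sub>R b) - monomial k z\<bar> / \<bar>t\<bar>"
          by (simp add: Q_def abs_mult abs_divide)
        also have "\<dots> \<le> \<bar>c k\<bar> * (3 / \<rho> * \<rho> ^ (\<Sum>b\<in>Basis. k b) * \<bar>t\<bar>) / \<bar>t\<bar>"
          using abs_monomial_diff_le[OF b \<rho> z t(2)] by (intro divide_right_mono mult_left_mono) auto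
        also have "\<dots> = 3 / \<rho> * (\<bar>c k\<bar> * \<rho> ^ (\<Sum>b\<in>Basis. k b))"
          using t(1) by simp
        finally show "\<bar>Q t k\<bar> \<le> 3 / \<rho> * (\<bar>c k\<bar> * \<rho> ^ (\<Sum>b\<in>Basis. k b))" .
      qed
    qed
    show "((\<lambda>t. Q t k) \<longlongrightarrow> c k * monomial_deriv b k z) (at 0)" for k
    proof -
      have "((\<lambda>t. (monomial k (z + t *\<^sub>R b) - monomial k (z + 0 *\<^sub>R b)) / (t - 0))
          \<longlongrightarrow> monomial_deriv b k z) (at 0)"
        using has_real_derivative_monomial_along_Basis[OF b] unfolding has_field_derivative_iff .
      then have "((\<lambda>t. c k * ((monomial k (z + t *\<^sub>R b) - monomial k z) / t))
          \<longlongrightarrow> c k * monomial_deriv b k z) (at 0)"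
        by (intro tendsto_mult_left) simp
      then show ?thesis by (simp add: Q_def)
    qed
  qed
  then have "((\<lambda>t. (S t - S 0) / (t - 0)) \<longlongrightarrow> infsum (\<lambda>k. c k * monomial_deriv b k z) multi_indices) (at 0)"
    by (rule Lim_transform_eventually) (use small in \<open>eventually_elim, simp add: quotient\<close>)
  then show ?thesis unfolding has_field_derivative_iff S_def .
qed

definition partial_deriv :: "('e::euclidean_space \<Rightarrow> real) \<Rightarrow> 'e \<Rightarrow> 'e \<Rightarrow> real" where
  "partial_deriv f b v = deriv (\<lambda>t. f (v + t *\<^sub>R b)) 0"

lemma real_analytic_on_partial_deriv:
  fixes f :: "'e::euclidean_space \<Rightarrow> real"
  assumes an: "real_analytic_on f S" and b: "b \<in> Basis" and p: "p \<in> S"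
  shows "isCont f p" and "isCont (partial_deriv f b) p"
    and "((\<lambda>t. f (p + t *\<^sub>R b)) has_real_derivative partial_deriv f b p) (at 0)"
proof -
  obtain r c where r: "r > 0" and hs: "\<And>v. v \<in> ball p r \<Longrightarrow>
      ((\<lambda>k. c k * monomial k (v - p)) has_sum f v) multi_indices"
    using an p unfolding real_analytic_on_def by blast
  obtain \<rho> where \<rho>: "0 < \<rho>" "\<rho> < r"
    and W: "(\<lambda>k. \<bar>c k\<bar> * \<rho> ^ (\<Sum>b\<in>Basis. k b)) summable_on multi_indices"
    using power_series_majorant[OF r, where c = c and p = p] hs unfolding summable_on_def by blast
  define D where "D v = infsum (\<lambda>k. c k * monomial_deriv b k (v - p)) multi_indices" for v
  have f_eq: "f v = infsum (\<lambda>k. c k * monomial k (v - p)) multi_indices" if "v \<in> ball p r" for v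
    using hs[OF that] by (simp add: infsumI)
  have near_p: "eventually (\<lambda>v. v \<in> ball p (\<rho> / 2)) (nhds p)"
    using \<rho> by (intro eventually_nhds_in_open) auto
  have partial_eq: "((\<lambda>t. f (v + t *\<^sub>R b)) has_real_derivative D v) (at 0) \<and> partial_deriv f b v = D v"
    if v: "v \<in> ball p (\<rho> / 2)" for v
  proof -
    have "((\<lambda>t. infsum (\<lambda>k. c k * monomial k ((v - p) + t *\<^sub>R b)) multi_indices)
        has_real_derivative D v) (at 0)"
      unfolding D_def using v by (intro power_series_has_partial_derivative[OF b \<rho>(1) W] Basis_inner_le_radius)
    moreover have "eventually (\<lambda>t. t \<in> ball 0 (\<rho> / 2)) (nhds (0::real))"
      using \<rho> by (intro eventually_nhds_in_open) auto
    then have "eventually (\<lambda>t. f (v + t *\<^sub>R b) =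
        infsum (\<lambda>k. c k * monomial k ((v - p) + t *\<^sub>R b)) multi_indices) (nhds 0)"
    proof eventually_elim
      case (elim t)
      have "dist p (v + t *\<^sub>R b) \<le> dist p v + \<bar>t\<bar>"
        using dist_triangle[of p "v + t *\<^sub>R b" v] b by (simp add: dist_norm)
      then have "v + t *\<^sub>R b \<in> ball p r" using elim v \<rho> by simp
      then show ?case by (simp add: f_eq algebra_simps)
    qed
    ultimately have "((\<lambda>t. f (v + t *\<^sub>R b)) has_real_derivative D v) (at 0)"
      by (subst DERIV_cong_ev) auto
    then show ?thesis unfolding partial_deriv_def using DERIV_imp_deriv by blast
  qed
  have "eventually (\<lambda>v. f v = infsum (\<lambda>k. c k * monomial k (v - p)) multi_indices) (nhds p)"
    using near_p by eventually_elim (use \<rho> f_eq in auto)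
  then show "isCont f p" using power_series_isCont[OF \<rho>(1) W] by (simp add: isCont_cong)
  have "eventually (\<lambda>v. partial_deriv f b v = D v) (nhds p)"
    using near_p by eventually_elim (use partial_eq in auto)
  then show "isCont (partial_deriv f b) p"
    using power_series_deriv_isCont[OF b \<rho>(1) W] by (simp add: isCont_cong D_def)
  show "((\<lambda>t. f (p + t *\<^sub>R b)) has_real_derivative partial_deriv f b p) (at 0)"
    using partial_eq[of p] \<rho> by simp
qed

lemma real_analytic_on_imp_continuous_on:
  fixes f :: "'e::euclidean_space \<Rightarrow> real"
  assumes "real_analytic_on f S"
  shows "continuous_on S f"
proof -
  obtain b :: 'e where "b \<in> Basis" using nonempty_Basis by blast
  then show ?thesis
    using real_analytic_on_partial_deriv(1)[OF assms] by (intro continuous_at_imp_continuous_on) blast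
qed

lemma continuous_on_partial_deriv:
  fixes f :: "'e::euclidean_space \<Rightarrow> real"
  assumes "real_analytic_on f S" "b \<in> Basis"
  shows "continuous_on S (partial_deriv f b)"
  using real_analytic_on_partial_deriv(2)[OF assms] by (intro continuous_at_imp_continuous_on) blast

lemma continuous_on_slice:
  assumes "continuous_on (S \<times> A) f" "a \<in> A"
  shows "continuous_on S (\<lambda>p. f (p, a))"
  by (rule continuous_on_compose2[OF assms(1)]) (use assms(2) in \<open>auto intro!: continuous_intros\<close>)

section \<open>Integrals with a moving lower limit\<close>

lemma fundamental_theorem_of_calculus_real:
  fixes f f' :: "real \<Rightarrow> real"
  assumes "a \<le> b" "\<And>x. x \<in> {a..b} \<Longrightarrow> (f has_real_derivative f' x) (at x within {a..b})"
  shows "integral {a..b} f' = f b - f a"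
  using fundamental_theorem_of_calculus[OF assms(1), of f f'] assms(2)
  by (auto simp: has_real_derivative_iff_has_vector_derivative integral_unique)

lemma integral_power_ratio_le:
  fixes u :: real and k :: nat
  assumes u: "0 < u" "u \<le> 1" and k: "k \<ge> 2"
  shows "integral {u..1} (\<lambda>x. (u / x) ^ k) \<le> u / (real k - 1)"
proof -
  define F where "F x = x * (u / x) ^ k / (1 - real k)" for x
  have "integral {u..1} (\<lambda>x. (u / x) ^ k) = F 1 - F u"
  proof (rule fundamental_theorem_of_calculus_real)
    show "u \<le> 1" using u by simp
    fix x assume x: "x \<in> {u..1}"
    then have x0: "x > 0" using u by auto
    have "(F has_real_derivative (1 * (u / x) ^ k + x * (real k * (u / x) ^ (k - 1) * (- u / x^2))) / (1 - real k)) (at x within {u..1})"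
      unfolding F_def using x0 k by (auto intro!: derivative_eq_intros simp: power2_eq_square)
    moreover have "(1 * (u / x) ^ k + x * (real k * (u / x) ^ (k - 1) * (- u / x^2))) / (1 - real k) = (u / x) ^ k"
    proof -
      have "x * (real k * (u / x) ^ (k - 1) * (- u / x^2)) = - real k * (u / x) ^ k"
      proof -
        have "(u / x) ^ k = (u / x) ^ (k - 1) * (u / x)" using k by (simp add: power_eq_if)
        then show ?thesis using x0 by (simp add: field_simps power2_eq_square)
      qed
      moreover have "(1 * P + - real k * P) / (1 - real k) = P" for P :: real
      proof -
        have "1 - real k \<noteq> 0" using k by simp
        then show ?thesis by (simp add: field_simps)
      qed
      ultimately show ?thesis by simp
    qed
    ultimately show "(F has_real_derivative (u / x) ^ k) (at x within {u..1})" by simp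
  qed
  also have "F 1 - F u = (u - u ^ k) / (real k - 1)"
  proof -
    have "F 1 = u ^ k / (1 - real k)" by (simp add: F_def)
    moreover have "F u = u / (1 - real k)" using u by (simp add: F_def)
    moreover have "u ^ k / (1 - real k) - u / (1 - real k) = (u - u ^ k) / (real k - 1)"
    proof -
      have "(a - b) / (1 - K) = (b - a) / (K - 1::real)" for a b K
        by (metis minus_diff_eq minus_divide_divide)
      then show ?thesis by (simp add: diff_divide_distrib[symmetric])
    qed
    ultimately show ?thesis by simp
  qed
  also have "\<dots> \<le> u / (real k - 1)"
    using u k by (intro divide_right_mono) auto
  finally show ?thesis .
qed

lemma abs_diff_sub_linear_le:
  fixes f f' :: "real \<Rightarrow> real"
  assumes deriv: "\<And>w. w \<in> {a..b} \<Longrightarrow> (f has_real_derivative f' w) (at w within {a..b})"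
    and close: "\<And>w. w \<in> {a..b} \<Longrightarrow> \<bar>f' w - f' w0\<bar> \<le> \<eta>"
    and u: "u \<in> {a..b}" and w0: "w0 \<in> {a..b}"
  shows "\<bar>f u - f w0 - (u - w0) * f' w0\<bar> \<le> \<eta> * \<bar>u - w0\<bar>"
proof -
  define \<phi> where "\<phi> w = f w - w * f' w0" for w
  have "norm (\<phi> u - \<phi> w0) \<le> \<eta> * norm (u - w0)"
  proof (rule field_differentiable_bound[of "{a..b}" \<phi> "\<lambda>w. f' w - f' w0"])
    fix w assume w: "w \<in> {a..b}"
    show "(\<phi> has_field_derivative f' w - f' w0) (at w within {a..b})"
      unfolding \<phi>_def using deriv[OF w] by (auto intro!: derivative_eq_intros)
    show "norm (f' w - f' w0) \<le> \<eta>" using close[OF w] by simp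
  qed (use u w0 in auto)
  then show ?thesis by (simp add: \<phi>_def algebra_simps)
qed

lemma abs_integral_sub_const_le:
  fixes f :: "real \<Rightarrow> real"
  assumes f: "continuous_on {a..b} f" and ab: "a \<le> b"
    and close: "\<And>x. x \<in> {a..b} \<Longrightarrow> \<bar>f x - y\<bar> \<le> \<eta>"
  shows "\<bar>integral {a..b} f - (b - a) * y\<bar> \<le> \<eta> * (b - a)"
proof -
  have "norm (integral {a..b} (\<lambda>x. f x - y)) \<le> \<eta> * (b - a)"
    using f ab close by (intro integral_bound) (auto intro!: continuous_intros)
  moreover have "integral {a..b} (\<lambda>x. f x - y) = integral {a..b} f - (b - a) * y"
    using f ab by (subst integral_diff) (auto intro: integrable_continuous_interval)
  ultimately show ?thesis by simp
qed

definition upper_triangle :: "real \<Rightarrow> (real \<times> real) set" where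
  "upper_triangle c = {(w, x). c \<le> w \<and> w \<le> x \<and> x \<le> 1}"

lemma compact_upper_triangle: "compact (upper_triangle c)"
proof -
  have "upper_triangle c = ({c..1} \<times> {c..1}) \<inter> {p. fst p \<le> snd p}"
    unfolding upper_triangle_def by auto
  then show ?thesis
    by (simp add: compact_Int_closed compact_Times closed_Collect_le continuous_on_fst continuous_on_snd)
qed

lemma continuous_on_upper_triangle_slice:
  assumes "continuous_on (upper_triangle c) (\<lambda>(w, x). h w x)" and "c \<le> w" and "w \<le> a"
  shows "continuous_on {a..1} (h w)"
proof -
  have "continuous_on {a..1} (\<lambda>x. (\<lambda>(w, x). h w x) (w, x))"
    by (rule continuous_on_compose2[OF assms(1)])
      (use assms(2,3) in \<open>auto intro!: continuous_intros simp: upper_triangle_def\<close>)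
  then show ?thesis by simp
qed

text \<open>The increment of \<open>\<Psi> w = \<integral>\<^sub>w\<^sup>1 h w\<close> splits into a part on the common interval
  \<open>[max u u\<^sub>0, 1]\<close>, controlled by the mean value theorem, and a short part near the diagonal,
  controlled by continuity of \<open>h\<close> at \<open>(u\<^sub>0, u\<^sub>0)\<close>.\<close>

lemma moving_integral_increment_le:
  fixes h hw :: "real \<Rightarrow> real \<Rightarrow> real"
  assumes ch: "continuous_on (upper_triangle c) (\<lambda>(w, x). h w x)"
    and chw: "continuous_on (upper_triangle c) (\<lambda>(w, x). hw w x)"
    and c: "0 \<le> c" and u: "c \<le> u" "u < 1" and u0: "c \<le> u0" "u0 < 1"
    and mvt: "\<And>x. x \<in> {max u u0..1} \<Longrightarrow> \<bar>h u x - h u0 x - (u - u0) * hw u0 x\<bar> \<le> \<eta> * \<bar>u - u0\<bar>"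
    and diag_u: "\<And>x. x \<in> {u..u0} \<Longrightarrow> \<bar>h u x - h u0 u0\<bar> \<le> \<eta>"
    and diag_u0: "\<And>x. x \<in> {u0..u} \<Longrightarrow> \<bar>h u0 x - h u0 u0\<bar> \<le> \<eta>"
    and hwB: "\<And>x. x \<in> {u0..1} \<Longrightarrow> \<bar>hw u0 x\<bar> \<le> B" and B: "B * \<bar>u - u0\<bar> \<le> \<eta>"
  shows "\<bar>integral {u..1} (h u) - integral {u0..1} (h u0)
           - (u - u0) * (- h u0 u0 + integral {u0..1} (hw u0))\<bar> \<le> 3 * (\<eta> * \<bar>u - u0\<bar>)"
proof -
  define m where "m = max u u0"
  have m: "u \<le> m" "u0 \<le> m" "m < 1" using u u0 by (auto simp: m_def)
  have cont_u: "continuous_on {a..1} (h u)" if "u \<le> a" for a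
    using continuous_on_upper_triangle_slice[OF ch u(1) that] .
  have cont_u0: "continuous_on {a..1} (h u0)" "continuous_on {a..1} (hw u0)" if "u0 \<le> a" for a
    using continuous_on_upper_triangle_slice[OF ch u0(1) that]
      continuous_on_upper_triangle_slice[OF chw u0(1) that] by auto
  note int = integrable_continuous_interval
  have split: "integral {w..1} f = integral {w..m} f + integral {m..1} f"
    if "continuous_on {w..1} f" "w \<le> m" for f :: "real \<Rightarrow> real" and w
    by (rule Henstock_Kurzweil_Integration.integral_combine[symmetric])
      (use that m in \<open>auto intro: int\<close>)
  have I1: "\<bar>integral {m..1} (h u) - integral {m..1} (h u0) - (u - u0) * integral {m..1} (hw u0)\<bar>
      \<le> \<eta> * \<bar>u - u0\<bar>"
  proof -
    have "norm (integral {m..1} (\<lambda>x. h u x - h u0 x - (u - u0) * hw u0 x)) \<le> (\<eta> * \<bar>u - u0\<bar>) * (1 - m)"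
      using m mvt by (intro integral_bound) (auto simp: m_def intro!: continuous_intros cont_u cont_u0)
    also have "\<dots> \<le> \<eta> * \<bar>u - u0\<bar>"
      using m c u u0 mvt[of 1] by (intro mult_left_le) (auto simp: m_def)
    finally show ?thesis using m
      by (simp add: integral_diff int cont_u cont_u0 continuous_intros)
  qed
  have I2: "\<bar>integral {u..m} (h u) - integral {u0..m} (h u0) + (u - u0) * h u0 u0\<bar> \<le> \<eta> * \<bar>u - u0\<bar>"
  proof (cases "u \<le> u0")
    case True
    have "continuous_on {u..u0} (h u)"
      by (rule continuous_on_subset[OF cont_u[OF order_refl]]) (use m in \<open>auto simp: m_def\<close>)
    from abs_integral_sub_const_le[OF this True diag_u] True show ?thesis
      by (simp add: m_def abs_if algebra_simps split: if_splits)
  next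
    case False
    have "continuous_on {u0..u} (h u0)"
      by (rule continuous_on_subset[OF cont_u0(1)[OF order_refl]]) (use m in \<open>auto simp: m_def\<close>)
    from abs_integral_sub_const_le[OF this _ diag_u0] False show ?thesis
      by (simp add: m_def abs_if algebra_simps split: if_splits)
  qed
  have I3: "\<bar>(u - u0) * integral {u0..m} (hw u0)\<bar> \<le> \<eta> * \<bar>u - u0\<bar>"
  proof -
    have "norm (integral {u0..m} (hw u0)) \<le> B * (m - u0)"
      using m hwB by (intro integral_bound) (auto intro: continuous_on_subset[OF cont_u0(2)[OF order_refl]])
    also have "\<dots> \<le> B * \<bar>u - u0\<bar>"
      using hwB[of u0] u0 by (intro mult_left_mono) (auto simp: m_def)
    finally have "\<bar>(u - u0) * integral {u0..m} (hw u0)\<bar> \<le> \<bar>u - u0\<bar> * (B * \<bar>u - u0\<bar>)"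
      by (simp add: abs_mult mult_left_mono)
    also have "\<dots> \<le> \<eta> * \<bar>u - u0\<bar>"
      using mult_left_mono[OF B abs_ge_zero[of "u - u0"]] by (simp add: mult.commute)
    finally show ?thesis .
  qed
  show ?thesis
    using I1 I2 I3 split[OF cont_u[OF order_refl] m(1)] split[OF cont_u0(1)[OF order_refl] m(2)]
      split[OF cont_u0(2)[OF order_refl] m(2)]
    by (simp add: algebra_simps)
qed

lemma moving_integral_increment_eventually_le:
  fixes h hw :: "real \<Rightarrow> real \<Rightarrow> real"
  assumes c: "0 \<le> c" and u0: "c < u0" "u0 < 1"
    and ch: "continuous_on (upper_triangle c) (\<lambda>(w, x). h w x)"
    and chw: "continuous_on (upper_triangle c) (\<lambda>(w, x). hw w x)"
    and der: "\<And>w x. (w, x) \<in> upper_triangle c \<Longrightarrow>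
                ((\<lambda>w. h w x) has_real_derivative hw w x) (at w within {c..x})"
    and \<eta>: "\<eta> > 0"
  shows "eventually (\<lambda>u. \<bar>integral {u..1} (h u) - integral {u0..1} (h u0)
           - (u - u0) * (- h u0 u0 + integral {u0..1} (hw u0))\<bar> \<le> 3 * (\<eta> * \<bar>u - u0\<bar>)) (at u0)"
proof -
  define T where "T = upper_triangle c"
  have uch: "uniformly_continuous_on T (\<lambda>(w, x). h w x)"
    and uchw: "uniformly_continuous_on T (\<lambda>(w, x). hw w x)"
    using ch chw compact_upper_triangle unfolding T_def by (auto intro: compact_uniformly_continuous)
  have "bounded ((\<lambda>(w, x). hw w x) ` T)"
    using chw compact_upper_triangle unfolding T_def by (intro compact_imp_bounded compact_continuous_image)
  then obtain B where B: "\<And>w x. (w, x) \<in> T \<Longrightarrow> \<bar>hw w x\<bar> \<le> B"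
    unfolding bounded_iff by fastforce
  have B0: "B \<ge> 0" using B[of u0 u0] u0 by (auto simp: T_def upper_triangle_def)
  obtain d1 where d1: "d1 > 0" and d1h: "\<And>p p'. p \<in> T \<Longrightarrow> p' \<in> T \<Longrightarrow> dist p' p < d1 \<Longrightarrow>
      dist ((\<lambda>(w, x). h w x) p') ((\<lambda>(w, x). h w x) p) < \<eta>"
    using uch \<eta> unfolding uniformly_continuous_on_def by metis
  obtain d2 where d2: "d2 > 0" and d2h: "\<And>p p'. p \<in> T \<Longrightarrow> p' \<in> T \<Longrightarrow> dist p' p < d2 \<Longrightarrow>
      dist ((\<lambda>(w, x). hw w x) p') ((\<lambda>(w, x). hw w x) p) < \<eta>"
    using uchw \<eta> unfolding uniformly_continuous_on_def by metis
  define d where "d = min (min (d1 / 2) d2) (min (u0 - c) (min (1 - u0) (\<eta> / (B + 1))))"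
  have d: "d > 0" using d1 d2 u0 \<eta> B0 by (simp add: d_def)
  show ?thesis
    unfolding eventually_at
  proof (intro exI[of _ d] conjI ballI impI d)
    fix u :: real assume "u \<noteq> u0 \<and> dist u u0 < d"
    then have ud: "2 * \<bar>u - u0\<bar> < d1" "\<bar>u - u0\<bar> < d2" "c < u" "u < 1" "\<bar>u - u0\<bar> < \<eta> / (B + 1)"
      by (auto simp: d_def dist_real_def)
    show "\<bar>integral {u..1} (h u) - integral {u0..1} (h u0)
        - (u - u0) * (- h u0 u0 + integral {u0..1} (hw u0))\<bar> \<le> 3 * (\<eta> * \<bar>u - u0\<bar>)"
    proof (rule moving_integral_increment_le[OF ch chw c])
      show "c \<le> u" "u < 1" "c \<le> u0" "u0 < 1" using ud u0 by auto
      show "\<bar>h u x - h u0 x - (u - u0) * hw u0 x\<bar> \<le> \<eta> * \<bar>u - u0\<bar>" if x: "x \<in> {max u u0..1}" for x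
      proof (rule abs_diff_sub_linear_le[of "min u u0" "max u u0"])
        fix w assume w: "w \<in> {min u u0..max u u0}"
        have wx: "c \<le> w" "w \<le> x" "x \<le> 1" using w x ud u0 by auto
        then have "((\<lambda>w. h w x) has_real_derivative hw w x) (at w within {c..x})"
          using der[of w x] by (simp add: upper_triangle_def)
        then show "((\<lambda>w. h w x) has_real_derivative hw w x) (at w within {min u u0..max u u0})"
          by (rule has_field_derivative_subset) (use x ud u0 in auto)
        have "dist (w, x) (u0, x) < d2"
          using w ud by (auto simp: dist_Pair_Pair dist_real_def)
        then show "\<bar>hw w x - hw u0 x\<bar> \<le> \<eta>"
          using d2h[of "(u0, x)" "(w, x)"] wx x ud u0
          by (auto simp: T_def upper_triangle_def dist_real_def)
      qed auto
      show "\<bar>h u x - h u0 u0\<bar> \<le> \<eta>" if x: "x \<in> {u..u0}" for x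
      proof -
        have "dist (u, x) (u0, u0) \<le> \<bar>u - u0\<bar> + \<bar>x - u0\<bar>"
          unfolding dist_Pair_Pair dist_real_def by (rule sqrt_sum_squares_le_sum) auto
        then have "dist (u, x) (u0, u0) < d1" using x ud by auto
        then show ?thesis
          using d1h[of "(u0, u0)" "(u, x)"] x ud u0 by (auto simp: T_def upper_triangle_def dist_real_def)
      qed
      show "\<bar>h u0 x - h u0 u0\<bar> \<le> \<eta>" if x: "x \<in> {u0..u}" for x
      proof -
        have "dist (u0, x) (u0, u0) < d1" using x ud by (auto simp: dist_Pair_Pair dist_real_def)
        then show ?thesis
          using d1h[of "(u0, u0)" "(u0, x)"] x ud u0 by (auto simp: T_def upper_triangle_def dist_real_def)
      qed
      show "\<bar>hw u0 x\<bar> \<le> B" if "x \<in> {u0..1}" for x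
        using B[of u0 x] that u0 by (auto simp: T_def upper_triangle_def)
      have "B * \<bar>u - u0\<bar> \<le> B * (\<eta> / (B + 1))" using ud B0 by (intro mult_left_mono) auto
      also have "\<dots> \<le> \<eta>" using B0 \<eta> by (simp add: field_simps)
      finally show "B * \<bar>u - u0\<bar> \<le> \<eta>" .
    qed
  qed
qed

lemma has_real_derivative_moving_integral:
  fixes h hw :: "real \<Rightarrow> real \<Rightarrow> real"
  assumes c: "0 \<le> c" and u0: "c < u0" "u0 < 1"
    and ch: "continuous_on (upper_triangle c) (\<lambda>(w, x). h w x)"
    and chw: "continuous_on (upper_triangle c) (\<lambda>(w, x). hw w x)"
    and der: "\<And>w x. (w, x) \<in> upper_triangle c \<Longrightarrow>
                ((\<lambda>w. h w x) has_real_derivative hw w x) (at w within {c..x})"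
  shows "((\<lambda>w. integral {w..1} (h w)) has_real_derivative
            (- h u0 u0 + integral {u0..1} (hw u0))) (at u0)"
proof -
  define L where "L = - h u0 u0 + integral {u0..1} (hw u0)"
  define \<Psi> where "\<Psi> w = integral {w..1} (h w)" for w
  have "((\<lambda>u. (\<Psi> u - \<Psi> u0) / (u - u0)) \<longlongrightarrow> L) (at u0)"
  proof (rule tendstoI)
    fix e :: real assume e: "e > 0"
    have "eventually (\<lambda>u. u \<noteq> u0 \<and> \<bar>\<Psi> u - \<Psi> u0 - (u - u0) * L\<bar> \<le> 3 * (e / 4 * \<bar>u - u0\<bar>)) (at u0)"
      using moving_integral_increment_eventually_le[OF c u0 ch chw der, of "e / 4"] e
      unfolding \<Psi>_def L_def by (auto simp: eventually_conj_iff eventually_at_filter)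
    then show "eventually (\<lambda>u. dist ((\<Psi> u - \<Psi> u0) / (u - u0)) L < e) (at u0)"
    proof eventually_elim
      case (elim u)
      moreover have "3 * (e / 4 * \<bar>u - u0\<bar>) < e * \<bar>u - u0\<bar>" using e elim by simp
      ultimately have "\<bar>\<Psi> u - \<Psi> u0 - (u - u0) * L\<bar> < e * \<bar>u - u0\<bar>" by linarith
      then have "\<bar>\<Psi> u - \<Psi> u0 - (u - u0) * L\<bar> / \<bar>u - u0\<bar> < e"
        using elim by (simp add: divide_less_eq)
      moreover have "(\<Psi> u - \<Psi> u0) / (u - u0) - L = (\<Psi> u - \<Psi> u0 - (u - u0) * L) / (u - u0)"
        using elim by (simp add: field_simps)
      ultimately show ?case by (simp add: dist_real_def abs_divide)
    qed
  qed
  then show ?thesis unfolding has_field_derivative_iff \<Psi>_def L_def .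
qed

section \<open>The orbit and the Dulac time\<close>

lemma theta_nonneg: "theta \<mu> \<epsilon> \<ge> 0"
  unfolding theta_def by (auto intro: real_root_ge_zero)

lemma theta_le_root_abs:
  assumes "\<mu> \<ge> 1"
  shows "theta \<mu> \<epsilon> \<le> root \<mu> \<bar>\<epsilon>\<bar>"
  unfolding theta_def using assms by auto

lemma theta_less:
  assumes "\<mu> \<ge> 1" "0 < t" "\<bar>\<epsilon>\<bar> < t ^ \<mu>"
  shows "theta \<mu> \<epsilon> < t"
proof -
  have "theta \<mu> \<epsilon> \<le> root \<mu> \<bar>\<epsilon>\<bar>" by (rule theta_le_root_abs[OF assms(1)])
  also have "\<dots> < root \<mu> (t ^ \<mu>)" using assms by (intro real_root_less_mono) auto
  also have "\<dots> = t" using assms by (intro real_root_pos2) auto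
  finally show ?thesis .
qed

lemma power_diff_pos_above_theta:
  assumes mu: "\<mu> \<ge> 1" and t: "t > theta \<mu> \<epsilon>"
  shows "t ^ \<mu> - \<epsilon> > 0"
proof (cases "\<epsilon> \<le> 0")
  case True
  then have "t > 0" using t by (simp add: theta_def)
  then show ?thesis using True zero_less_power[of t \<mu>] by linarith
next
  case False
  then have th: "theta \<mu> \<epsilon> = root \<mu> \<epsilon>" by (simp add: theta_def)
  have "root \<mu> \<epsilon> \<ge> 0" using False by (intro real_root_ge_zero) simp
  then have "root \<mu> \<epsilon> ^ \<mu> < t ^ \<mu>" using t th mu by (intro power_strict_mono) auto
  moreover have "root \<mu> \<epsilon> ^ \<mu> = \<epsilon>" using False mu by (intro real_root_pow_pos2) auto
  ultimately show ?thesis by simp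
qed

lemma linear_ode_solution_unique:
  fixes a G y :: "real \<Rightarrow> real"
  assumes G: "\<And>t. t \<in> {u..1} \<Longrightarrow> (G has_real_derivative a t) (at t within {u..1})"
    and y: "\<And>t. t \<in> {u..1} \<Longrightarrow> (y has_real_derivative - a t * y t) (at t within {u..1})"
    and y_u: "y u = 1" and x: "x \<in> {u..1}"
  shows "y x = exp (G u - G x)"
proof -
  define z where "z t = y t * exp (G t - G u)" for t
  have "(z has_real_derivative 0) (at t within {u..1})" if t: "t \<in> {u..1}" for t
  proof -
    have "(z has_real_derivative - a t * y t * exp (G t - G u) + y t * (exp (G t - G u) * (a t - 0)))
        (at t within {u..1})"
      unfolding z_def by (auto intro!: derivative_eq_intros y[OF t] G[OF t])
    then show ?thesis by (simp add: field_simps)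
  qed
  then obtain k where k: "\<And>t. t \<in> {u..1} \<Longrightarrow> z t = k"
    using has_field_derivative_zero_constant[of "{u..1}" z] by auto
  have "k = 1" using k[of u] x y_u by (simp add: z_def)
  then have "y x * exp (G x - G u) = 1" using k[OF x] by (simp add: z_def)
  then show ?thesis by (simp add: exp_diff field_simps)
qed

lemma orbit_y_eq_exp:
  fixes V G :: "real \<Rightarrow> real"
  assumes u: "u = s + theta \<mu> \<epsilon>"
    and G: "\<And>t. t \<in> {u..1} \<Longrightarrow> (G has_real_derivative V t / (t * (t ^ \<mu> - \<epsilon>))) (at t within {u..1})"
    and x: "x \<in> {u..1}"
  shows "orbit_y \<mu> V \<epsilon> s x = exp (G u - G x)"
  unfolding orbit_y_def u[symmetric]
proof (rule the_equality)
  define Y where "Y x = exp (G u - G x)" for x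
  have "(Y has_real_derivative - V t * Y t / (t * (t ^ \<mu> - \<epsilon>))) (at t within {u..1})"
    if t: "t \<in> {u..1}" for t
  proof -
    have "(Y has_real_derivative Y t * (0 - V t / (t * (t ^ \<mu> - \<epsilon>)))) (at t within {u..1})"
      unfolding Y_def by (auto intro!: derivative_eq_intros G[OF t])
    then show ?thesis by (simp add: field_simps)
  qed
  moreover have "Y u = 1" by (simp add: Y_def)
  ultimately show "\<exists>y. y u = 1 \<and> (\<forall>t\<in>{u..1}. (y has_real_derivative - V t * y t / (t * (t ^ \<mu> - \<epsilon>)))
      (at t within {u..1})) \<and> y x = exp (G u - G x)"
    by (intro exI[of _ Y]) (auto simp: Y_def)
next
  fix v
  assume "\<exists>y. y u = 1 \<and> (\<forall>t\<in>{u..1}. (y has_real_derivative - V t * y t / (t * (t ^ \<mu> - \<epsilon>)))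
      (at t within {u..1})) \<and> y x = v"
  then obtain y where "y u = 1" "y x = v"
    and "\<And>t. t \<in> {u..1} \<Longrightarrow> (y has_real_derivative - (V t / (t * (t ^ \<mu> - \<epsilon>))) * y t) (at t within {u..1})"
    by (auto simp: field_simps)
  with linear_ode_solution_unique[OF G] x show "v = exp (G u - G x)" by metis
qed

lemma abs_weighted_diff_le:
  fixes q :: "real \<Rightarrow> real"
  assumes bound: "\<And>x. x \<in> {0..1} \<Longrightarrow> \<bar>q x\<bar> \<le> B" and \<delta>: "\<delta> > 0"
    and close: "\<And>x x'. x \<in> {0..1} \<Longrightarrow> x' \<in> {0..1} \<Longrightarrow> \<bar>x - x'\<bar> < \<delta> \<Longrightarrow> \<bar>q x - q x'\<bar> \<le> \<eta>"
    and ux: "0 \<le> u" "u \<le> x" "x \<le> 1"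
  shows "\<bar>x * q x - u * q u\<bar> \<le> u * \<eta> + (B + 2 * B / \<delta>) * (x - u)"
proof -
  have B: "0 \<le> B" and \<eta>: "0 \<le> \<eta>"
    using bound[of u] close[of u u] ux \<delta> by auto
  have "\<bar>q x - q u\<bar> \<le> \<eta> + 2 * B * (x - u) / \<delta>"
  proof (cases "x - u < \<delta>")
    case True
    then show ?thesis using close[of x u] ux B \<delta> by (simp add: add_increasing2)
  next
    case False
    then have "2 * B \<le> 2 * B * (x - u) / \<delta>" using B \<delta> by (simp add: le_divide_eq mult_left_mono)
    moreover have "\<bar>q x - q u\<bar> \<le> 2 * B" using bound[of x] bound[of u] ux by fastforce
    ultimately show ?thesis using \<eta> by linarith
  qed
  then have "u * \<bar>q x - q u\<bar> \<le> u * (\<eta> + 2 * B * (x - u) / \<delta>)"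
    using ux by (intro mult_left_mono) auto
  then have "\<bar>u * (q x - q u)\<bar> \<le> u * \<eta> + u * (2 * B * (x - u) / \<delta>)"
    using ux by (simp only: abs_mult distrib_left abs_of_nonneg)
  also have "u * (2 * B * (x - u) / \<delta>) \<le> 2 * B * (x - u) / \<delta>"
    using ux B \<delta> by (intro mult_left_le_one_le) auto
  finally have second: "\<bar>u * (q x - q u)\<bar> \<le> u * \<eta> + 2 * B * (x - u) / \<delta>" by simp
  have first: "\<bar>(x - u) * q x\<bar> \<le> (x - u) * B"
    using bound[of x] ux by (simp add: abs_mult mult_left_mono)
  have "x * q x - u * q u = (x - u) * q x + u * (q x - q u)" by (simp add: algebra_simps)
  then have "\<bar>x * q x - u * q u\<bar> \<le> (x - u) * B + (u * \<eta> + 2 * B * (x - u) / \<delta>)"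
    using abs_triangle_ineq[of "(x - u) * q x" "u * (q x - q u)"] first second by linarith
  also have "\<dots> = u * \<eta> + (B + 2 * B / \<delta>) * (x - u)"
    using \<delta> by (simp add: field_simps)
  finally show ?thesis .
qed

locale dulac_field =
  fixes \<mu> :: nat and \<epsilon> :: real and U Uy :: "real \<Rightarrow> real \<Rightarrow> real" and V :: "real \<Rightarrow> real"
  assumes mu: "\<mu> \<ge> 1"
    and U_cont: "continuous_on ({-1..1} \<times> {-1..1}) (\<lambda>(x, y). U x y)"
    and Uy_cont: "continuous_on ({-1..1} \<times> {-1..1}) (\<lambda>(x, y). Uy x y)"
    and U_deriv: "\<And>x y. x \<in> {-1..1} \<Longrightarrow> y \<in> {-1..1} \<Longrightarrow> (U x has_real_derivative Uy x y) (at y)"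
    and V_cont: "continuous_on {-1..1} V"
    and V_pos: "\<And>x. x \<in> {-1..1} \<Longrightarrow> V x > 0"
begin

text \<open>\<open>orbit (s + theta \<mu> \<epsilon>)\<close> is the trajectory \<open>y(\<cdot>; s)\<close>; \<open>rate\<close> is minus its logarithmic derivative.\<close>

definition rate :: "real \<Rightarrow> real" where
  "rate t = V t / (t * (t ^ \<mu> - \<epsilon>))"

definition orbit :: "real \<Rightarrow> real \<Rightarrow> real" where
  "orbit u x = exp (- integral {u..x} rate)"

definition dulac_derivative :: "real \<Rightarrow> real" where
  "dulac_derivative u = - U u 1 / (u ^ \<mu> - \<epsilon>)
     + integral {u..1} (\<lambda>x. Uy x (orbit u x) * orbit u x * rate u / (x ^ \<mu> - \<epsilon>))"

lemma denominator_pos: "theta \<mu> \<epsilon> < t \<Longrightarrow> t ^ \<mu> - \<epsilon> > 0"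
  using power_diff_pos_above_theta[OF mu] .

lemma pos_above_theta: "theta \<mu> \<epsilon> < t \<Longrightarrow> 0 < t"
  using theta_nonneg[of \<mu> \<epsilon>] by linarith

lemma rate_continuous_on:
  assumes c: "theta \<mu> \<epsilon> < c"
  shows "continuous_on {c..1} rate"
proof -
  have "t * (t ^ \<mu> - \<epsilon>) \<noteq> 0" if "t \<in> {c..1}" for t
    using that c denominator_pos[of t] pos_above_theta[of t] by auto
  moreover have "continuous_on {c..1} V"
    by (rule continuous_on_subset[OF V_cont]) (use c pos_above_theta[OF c] in auto)
  ultimately show ?thesis unfolding rate_def by (intro continuous_intros) auto
qed

lemma rate_pos:
  assumes "theta \<mu> \<epsilon> < t" "t \<le> 1"
  shows "rate t > 0"
  using assms V_pos[of t] denominator_pos[of t] pos_above_theta[of t]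
  unfolding rate_def by (auto intro!: divide_pos_pos)

lemma rate_integrable:
  assumes "theta \<mu> \<epsilon> < c" "c \<le> a" "b \<le> 1"
  shows "rate integrable_on {a..b}"
  by (rule integrable_continuous_interval, rule continuous_on_subset[OF rate_continuous_on[OF assms(1)]])
    (use assms in auto)

lemma integral_rate_nonneg:
  assumes "theta \<mu> \<epsilon> < a" "b \<le> 1"
  shows "0 \<le> integral {a..b} rate"
  using assms rate_pos by (intro integral_nonneg rate_integrable[of a]) (auto intro: less_imp_le)

lemma integral_rate_combine:
  assumes "theta \<mu> \<epsilon> < a" "a \<le> b" "b \<le> x" "x \<le> 1"
  shows "integral {a..x} rate = integral {a..b} rate + integral {b..x} rate"
  by (rule Henstock_Kurzweil_Integration.integral_combine[symmetric])
    (use assms in \<open>auto intro: rate_integrable[of a]\<close>)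

lemma orbit_pos: "0 < orbit u x"
  by (simp add: orbit_def)

lemma orbit_le_one:
  assumes "theta \<mu> \<epsilon> < u" "x \<le> 1"
  shows "orbit u x \<le> 1"
  using integral_rate_nonneg[OF assms] by (simp add: orbit_def)

lemma orbit_mem_unit:
  assumes "theta \<mu> \<epsilon> < u" "x \<le> 1"
  shows "orbit u x \<in> {0..1}" "orbit u x \<in> {-1..1}"
  using orbit_pos[of u x] orbit_le_one[OF assms] by auto

lemma orbit_self [simp]: "orbit u u = 1"
  by (simp add: orbit_def)

lemma orbit_eq_exp_diff:
  assumes "theta \<mu> \<epsilon> < c" "c \<le> w" "w \<le> x" "x \<le> 1"
  shows "orbit w x = exp (integral {c..w} rate - integral {c..x} rate)"
  using integral_rate_combine[OF assms] by (simp add: orbit_def)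

lemma continuous_on_orbit:
  assumes c: "theta \<mu> \<epsilon> < c"
  shows "continuous_on (upper_triangle c) (\<lambda>(w, x). orbit w x)"
proof -
  define G where "G x = integral {c..x} rate" for x
  have "continuous_on {c..1} G"
    unfolding G_def by (rule indefinite_integral_continuous_1[OF rate_integrable[OF c]]) auto
  then have "continuous_on (upper_triangle c) (\<lambda>p. exp (G (fst p) - G (snd p)))"
    by (intro continuous_intros; rule continuous_on_compose2[of "{c..1}"])
      (auto simp: upper_triangle_def intro!: continuous_intros)
  then show ?thesis
    by (rule continuous_on_eq)
      (auto simp: upper_triangle_def G_def orbit_eq_exp_diff[OF c] case_prod_beta)
qed

lemma has_real_derivative_orbit_start:
  assumes c: "theta \<mu> \<epsilon> < c" and wx: "c \<le> w" "w \<le> x" "x \<le> 1"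
  shows "((\<lambda>w. orbit w x) has_real_derivative orbit w x * rate w) (at w within {c..x})"
proof -
  define G where "G x = integral {c..x} rate" for x
  have "(G has_real_derivative rate w) (at w within {c..1})"
    unfolding G_def has_real_derivative_iff_has_vector_derivative
    using wx by (intro integral_has_vector_derivative[OF rate_continuous_on[OF c]]) auto
  then have "(G has_real_derivative rate w) (at w within {c..x})"
    by (rule has_field_derivative_subset) (use wx in auto)
  then have "((\<lambda>w. exp (G w - G x)) has_real_derivative exp (G w - G x) * (rate w - 0)) (at w within {c..x})"
    by (auto intro!: derivative_eq_intros)
  then have "((\<lambda>w. exp (G w - G x)) has_real_derivative orbit w x * rate w) (at w within {c..x})"
    using orbit_eq_exp_diff[OF c wx] by (simp add: G_def)
  then show ?thesis
    by (rule has_field_derivative_transform_within[OF _ zero_less_one])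
      (use c wx in \<open>auto simp: G_def orbit_eq_exp_diff\<close>)
qed

lemma orbit_y_eq_orbit:
  assumes s: "0 < s" and u: "u = s + theta \<mu> \<epsilon>" and x: "x \<in> {u..1}"
  shows "orbit_y \<mu> V \<epsilon> s x = orbit u x"
proof -
  have c: "theta \<mu> \<epsilon> < u" using s u by simp
  have "orbit_y \<mu> V \<epsilon> s x = exp (integral {u..u} rate - integral {u..x} rate)"
  proof (rule orbit_y_eq_exp[OF u])
    fix t assume t: "t \<in> {u..1}"
    have "((\<lambda>x. integral {u..x} rate) has_real_derivative rate t) (at t within {u..1})"
      unfolding has_real_derivative_iff_has_vector_derivative
      using t by (intro integral_has_vector_derivative[OF rate_continuous_on[OF c]])
    then show "((\<lambda>x. integral {u..x} rate) has_real_derivative V t / (t * (t ^ \<mu> - \<epsilon>)))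
        (at t within {u..1})"
      by (simp add: rate_def)
  qed (use x in auto)
  then show ?thesis by (simp add: orbit_def)
qed

lemma dulac_time_eq_integral:
  assumes "0 < s"
  shows "dulac_time \<mu> U V \<epsilon> s
    = integral {s + theta \<mu> \<epsilon>..1} (\<lambda>x. U x (orbit (s + theta \<mu> \<epsilon>) x) / (x ^ \<mu> - \<epsilon>))"
  unfolding dulac_time_def using orbit_y_eq_orbit[OF assms refl] by (intro integral_cong) simp

lemma dulac_time_has_derivative:
  assumes s: "0 < s" and u1: "s + theta \<mu> \<epsilon> < 1"
  shows "((\<lambda>\<sigma>. dulac_time \<mu> U V \<epsilon> \<sigma>) has_real_derivative dulac_derivative (s + theta \<mu> \<epsilon>)) (at s)"
proof -
  define u where "u = s + theta \<mu> \<epsilon>"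
  define c where "c = theta \<mu> \<epsilon> + s / 2"
  have c: "theta \<mu> \<epsilon> < c" "0 \<le> c" "c < u"
    using s pos_above_theta[of c] by (auto simp: c_def u_def)
  define T where "T = upper_triangle c"
  define h where "h w x = U x (orbit w x) / (x ^ \<mu> - \<epsilon>)" for w x
  define hw where "hw w x = Uy x (orbit w x) * (orbit w x * rate w) / (x ^ \<mu> - \<epsilon>)" for w x
  have in_T: "theta \<mu> \<epsilon> < w" "theta \<mu> \<epsilon> < x" "x \<in> {-1..1}" "orbit w x \<in> {-1..1}"
    if "(w, x) \<in> T" for w x
    using that c pos_above_theta[of x] orbit_le_one[of w x] orbit_pos[of w x]
    by (auto simp: T_def upper_triangle_def)
  have cont_orbit: "continuous_on T (\<lambda>p. orbit (fst p) (snd p))"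
    using continuous_on_orbit[OF c(1)] by (simp add: T_def case_prod_beta)
  have square: "(\<lambda>p. (snd p, orbit (fst p) (snd p))) ` T \<subseteq> {-1..1} \<times> {-1..1}"
    using in_T by fastforce
  have "continuous_on T (\<lambda>p. (snd p, orbit (fst p) (snd p)))"
    by (intro continuous_intros cont_orbit)
  then have "continuous_on T (\<lambda>p. U (snd p) (orbit (fst p) (snd p)))"
    "continuous_on T (\<lambda>p. Uy (snd p) (orbit (fst p) (snd p)))"
    using continuous_on_compose2[OF U_cont _ square] continuous_on_compose2[OF Uy_cont _ square]
    by auto
  moreover have "continuous_on T (\<lambda>p. rate (fst p))"
    by (rule continuous_on_compose2[OF rate_continuous_on[OF c(1)]])
      (auto simp: T_def upper_triangle_def intro!: continuous_intros)
  moreover have "snd p ^ \<mu> - \<epsilon> \<noteq> 0" if "p \<in> T" for p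
    using that in_T[of "fst p" "snd p"] denominator_pos by fastforce
  ultimately have ch: "continuous_on T (\<lambda>(w, x). h w x)"
    and chw: "continuous_on T (\<lambda>(w, x). hw w x)"
    unfolding h_def hw_def case_prod_beta by (auto intro!: continuous_intros cont_orbit)
  have der: "((\<lambda>w. h w x) has_real_derivative hw w x) (at w within {c..x})" if "(w, x) \<in> T" for w x
  proof -
    have "((\<lambda>w. U x (orbit w x)) has_real_derivative Uy x (orbit w x) * (orbit w x * rate w))
        (at w within {c..x})"
      by (rule DERIV_chain2[OF U_deriv has_real_derivative_orbit_start[OF c(1)]])
        (use that in_T[OF that] in \<open>auto simp: T_def upper_triangle_def\<close>)
    from DERIV_cdivide[OF this, of "x ^ \<mu> - \<epsilon>"] show ?thesis
      unfolding h_def hw_def .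
  qed
  have "((\<lambda>w. integral {w..1} (h w)) has_real_derivative - h u u + integral {u..1} (hw u)) (at u)"
    using c u1 ch chw der
    by (intro has_real_derivative_moving_integral) (auto simp: T_def u_def)
  moreover have "- h u u + integral {u..1} (hw u) = dulac_derivative u"
    by (simp add: h_def hw_def[abs_def] dulac_derivative_def mult.assoc)
  ultimately have "((\<lambda>\<sigma>. integral {\<sigma> + theta \<mu> \<epsilon>..1} (h (\<sigma> + theta \<mu> \<epsilon>))) has_real_derivative
      dulac_derivative u) (at s)"
    using DERIV_shift[of "\<lambda>w. integral {w..1} (h w)" _ s "theta \<mu> \<epsilon>"] by (simp add: u_def)
  then show ?thesis
    unfolding u_def
    by (rule has_field_derivative_transform_within_open[of _ _ _ "{0<..}"])
      (use s in \<open>auto simp: dulac_time_eq_integral h_def[abs_def]\<close>)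
qed

lemma has_real_derivative_orbit_end:
  assumes u: "theta \<mu> \<epsilon> < u" and x: "x \<in> {u..1}"
  shows "(orbit u has_real_derivative - (rate x * orbit u x)) (at x within {u..1})"
proof -
  have "((\<lambda>x. integral {u..x} rate) has_real_derivative rate x) (at x within {u..1})"
    unfolding has_real_derivative_iff_has_vector_derivative
    using x by (intro integral_has_vector_derivative[OF rate_continuous_on[OF u]])
  then show ?thesis
    unfolding orbit_def by (auto intro!: derivative_eq_intros)
qed

lemma continuous_on_orbit_end:
  assumes "theta \<mu> \<epsilon> < u"
  shows "continuous_on {u..1} (orbit u)"
  using has_real_derivative_orbit_end[OF assms]
  by (intro continuous_on_eq_continuous_within[THEN iffD2] ballI DERIV_continuous) blast

lemma orbit_antimono:
  assumes "theta \<mu> \<epsilon> < u" "u \<le> x" "x \<le> x'" "x' \<le> 1"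
  shows "orbit u x' \<le> orbit u x"
  using integral_rate_combine[OF assms] integral_rate_nonneg[of x x'] assms
  by (simp add: orbit_def)

text \<open>Near the saddle the rate dominates \<open>k / t\<close>, so the orbit decays at least like \<open>(u / x)\<^sup>k\<close>.\<close>

lemma orbit_le_power:
  assumes u: "theta \<mu> \<epsilon> < u" and x: "u \<le> x" "x \<le> r" "r \<le> 1"
    and V_large: "\<And>t. t \<in> {u..r} \<Longrightarrow> real k * (r ^ \<mu> + \<bar>\<epsilon>\<bar>) \<le> V t"
  shows "orbit u x \<le> (u / x) ^ k"
proof -
  have u0: "0 < u" using pos_above_theta[OF u] .
  have "integral {u..x} (\<lambda>t. real k / t) = real k * ln x - real k * ln u"
    using x u0 by (intro fundamental_theorem_of_calculus_real) (auto intro!: derivative_eq_intros)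
  moreover have "integral {u..x} (\<lambda>t. real k / t) \<le> integral {u..x} rate"
  proof (rule integral_le)
    show "(\<lambda>t. real k / t) integrable_on {u..x}"
      using u0 by (intro integrable_continuous_interval) (auto intro!: continuous_intros)
    show "rate integrable_on {u..x}" using x u by (intro rate_integrable[of u]) auto
    fix t assume t: "t \<in> {u..x}"
    have t0: "0 < t" and den: "0 < t ^ \<mu> - \<epsilon>"
      using t u pos_above_theta denominator_pos by auto
    have "t ^ \<mu> \<le> r ^ \<mu>" using t x t0 by (intro power_mono) auto
    then have "real k * (t ^ \<mu> - \<epsilon>) \<le> real k * (r ^ \<mu> + \<bar>\<epsilon>\<bar>)"
      by (intro mult_left_mono) auto
    then have "real k * (t ^ \<mu> - \<epsilon>) \<le> V t"
      using V_large[of t] t x by auto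
    then have "real k * (t ^ \<mu> - \<epsilon>) / (t * (t ^ \<mu> - \<epsilon>)) \<le> rate t"
      unfolding rate_def using t0 den by (intro divide_right_mono) auto
    then show "real k / t \<le> rate t" using t0 den by simp
  qed
  ultimately have "real k * (ln x - ln u) \<le> integral {u..x} rate" by (simp add: algebra_simps)
  then have "orbit u x \<le> exp (real k * ln (u / x))"
    using u0 x by (simp add: orbit_def ln_div algebra_simps)
  also have "\<dots> = (u / x) ^ k" using u0 x by (simp add: exp_of_nat_mult)
  finally show ?thesis .
qed

lemma orbit_decay_bounds:
  assumes u: "theta \<mu> \<epsilon> < u" "u < r" and r: "r \<le> 1" and k: "k \<ge> 2"
    and V_large: "\<And>t. t \<in> {u..r} \<Longrightarrow> real k * (r ^ \<mu> + \<bar>\<epsilon>\<bar>) \<le> V t"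
  shows "orbit u 1 \<le> u + u / r ^ k"
    and "integral {u..1} (orbit u) \<le> u / (real k - 1) + u * (u / r ^ k)"
proof -
  have u0: "0 < u" and u1: "u \<le> 1" and r0: "0 < r"
    using pos_above_theta[OF u(1)] u r by auto
  have orbit_le: "orbit u x \<le> (u / x) ^ k + (u / r) ^ k" if x: "x \<in> {u..1}" for x
  proof (cases "x \<le> r")
    case True
    then show ?thesis
      using orbit_le_power[OF u(1) _ True r V_large] x u0 by (simp add: add_increasing2)
  next
    case False
    then have "orbit u x \<le> orbit u r" using x u by (intro orbit_antimono) auto
    also have "\<dots> \<le> (u / r) ^ k" using orbit_le_power[OF u(1) _ order_refl r V_large] u by simp
    finally show ?thesis using x u0 by (simp add: add_increasing)
  qed
  have uk: "u ^ k \<le> u" using u0 u1 k power_decreasing[of 1 k u] by simp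
  have ur_le: "(u / r) ^ k \<le> u * (u / r ^ k)"
  proof -
    have "u ^ k \<le> u ^ 2" using u0 u1 k by (intro power_decreasing) auto
    then have "u ^ k / r ^ k \<le> u ^ 2 / r ^ k" using r0 by (intro divide_right_mono) auto
    then show ?thesis by (simp add: power_divide power2_eq_square)
  qed
  show "orbit u 1 \<le> u + u / r ^ k"
  proof -
    have "(u / r) ^ k \<le> u / r ^ k" using uk r0 by (simp add: power_divide divide_right_mono)
    then show ?thesis using orbit_le[of 1] uk u1 by simp
  qed
  have "integral {u..1} (orbit u) \<le> integral {u..1} (\<lambda>x. (u / x) ^ k + (u / r) ^ k)"
    using continuous_on_orbit_end[OF u(1)] orbit_le u0
    by (intro integral_le) (auto intro!: integrable_continuous_interval continuous_intros)
  also have "\<dots> = integral {u..1} (\<lambda>x. (u / x) ^ k) + (1 - u) * (u / r) ^ k"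
    using u0 u1 by (subst integral_add) (auto intro!: integrable_continuous_interval continuous_intros)
  also have "\<dots> \<le> u / (real k - 1) + u * (u / r ^ k)"
  proof -
    have "(1 - u) * (u / r) ^ k \<le> (u / r) ^ k" using u0 r0 by (simp add: mult_left_le_one_le)
    then show ?thesis using integral_power_ratio_le[OF u0 u1 k] ur_le by linarith
  qed
  finally show "integral {u..1} (orbit u) \<le> u / (real k - 1) + u * (u / r ^ k)" .
qed

lemma integral_rate_orbit:
  assumes u: "theta \<mu> \<epsilon> < u" "u \<le> 1"
  shows "integral {u..1} (\<lambda>x. rate x * orbit u x) = 1 - orbit u 1"
proof -
  have "integral {u..1} (\<lambda>x. rate x * orbit u x) = (- orbit u 1) - (- orbit u u)"
    using u by (intro fundamental_theorem_of_calculus_real)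
      (auto intro!: derivative_eq_intros has_real_derivative_orbit_end)
  then show ?thesis by simp
qed

lemma integral_moment_rate_orbit:
  assumes u: "theta \<mu> \<epsilon> < u" "u \<le> 1"
  shows "integral {u..1} (\<lambda>x. (x - u) * (rate x * orbit u x))
    = integral {u..1} (orbit u) - (1 - u) * orbit u 1"
proof -
  have "integral {u..1} (\<lambda>x. - orbit u x + (x - u) * (rate x * orbit u x))
      = (- ((1 - u) * orbit u 1)) - (- ((u - u) * orbit u u))"
  proof (rule fundamental_theorem_of_calculus_real)
    fix x assume x: "x \<in> {u..1}"
    have "((\<lambda>x. - ((x - u) * orbit u x)) has_real_derivative
        - ((1 - 0) * orbit u x + (x - u) * (- (rate x * orbit u x)))) (at x within {u..1})"
      by (auto intro!: derivative_eq_intros has_real_derivative_orbit_end[OF u(1) x])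
    then show "((\<lambda>x. - ((x - u) * orbit u x)) has_real_derivative
        - orbit u x + (x - u) * (rate x * orbit u x)) (at x within {u..1})"
      by (simp add: algebra_simps)
  qed (use u in auto)
  moreover have "integral {u..1} (\<lambda>x. - orbit u x + (x - u) * (rate x * orbit u x))
      = - integral {u..1} (orbit u) + integral {u..1} (\<lambda>x. (x - u) * (rate x * orbit u x))"
    using continuous_on_orbit_end[OF u(1)] rate_continuous_on[OF u(1)]
    by (subst integral_add) (auto intro!: integrable_continuous_interval continuous_intros)
  ultimately show ?thesis by simp
qed

lemma integral_Uy_orbit:
  assumes u: "theta \<mu> \<epsilon> < u" "u \<le> 1"
  shows "integral {u..1} (\<lambda>x. Uy u (orbit u x) * (rate x * orbit u x)) = U u 1 - U u (orbit u 1)"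
proof -
  have "integral {u..1} (\<lambda>x. Uy u (orbit u x) * (rate x * orbit u x)) = (- U u (orbit u 1)) - (- U u (orbit u u))"
  proof (rule fundamental_theorem_of_calculus_real)
    fix x assume x: "x \<in> {u..1}"
    have "((\<lambda>x. U u (orbit u x)) has_real_derivative Uy u (orbit u x) * (- (rate x * orbit u x)))
        (at x within {u..1})"
      by (rule DERIV_chain2[OF U_deriv has_real_derivative_orbit_end[OF u(1) x]])
        (use u x pos_above_theta[OF u(1)] orbit_pos[of u x] orbit_le_one[of u x] in auto)
    then show "((\<lambda>x. - U u (orbit u x)) has_real_derivative Uy u (orbit u x) * (rate x * orbit u x))
        (at x within {u..1})"
      using DERIV_minus by fastforce
  qed (use u in auto)
  then show ?thesis by simp
qed

definition remainder_density :: "real \<Rightarrow> real \<Rightarrow> real" where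
  "remainder_density u x =
     (x * (Uy x (orbit u x) / V x) - u * (Uy u (orbit u x) / V u)) * (rate x * orbit u x)"

lemma continuous_on_Uy_orbit:
  assumes u: "theta \<mu> \<epsilon> < u"
    and w: "continuous_on {u..1} w" "\<And>x. x \<in> {u..1} \<Longrightarrow> w x \<in> {-1..1}"
  shows "continuous_on {u..1} (\<lambda>x. Uy (w x) (orbit u x))"
proof -
  have "continuous_on {u..1} (\<lambda>x. (w x, orbit u x))"
    by (intro continuous_intros w(1) continuous_on_orbit_end[OF u])
  moreover have "(\<lambda>x. (w x, orbit u x)) ` {u..1} \<subseteq> {-1..1} \<times> {-1..1}"
    using w(2) orbit_mem_unit(2)[OF u] by auto
  ultimately have "continuous_on {u..1} (\<lambda>x. (\<lambda>(x, y). Uy x y) (w x, orbit u x))"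
    by (rule continuous_on_compose2[OF Uy_cont])
  then show ?thesis by simp
qed

lemma continuous_on_remainder_density:
  assumes u: "theta \<mu> \<epsilon> < u" "u \<le> 1"
  shows "continuous_on {u..1} (remainder_density u)"
proof -
  have u0: "0 < u" using pos_above_theta[OF u(1)] .
  have cont_Uy: "continuous_on {u..1} (\<lambda>x. Uy x (orbit u x))" "continuous_on {u..1} (\<lambda>x. Uy u (orbit u x))"
    using u0 u by (auto intro!: continuous_on_Uy_orbit[OF u(1)] continuous_intros)
  have cont_V: "continuous_on {u..1} V" by (rule continuous_on_subset[OF V_cont]) (use u0 in auto)
  have "V x \<noteq> 0" if "x \<in> {u..1}" for x using V_pos[of x] that u0 by auto
  then show ?thesis
    unfolding remainder_density_def
    by (intro continuous_intros cont_Uy cont_V continuous_on_orbit_end[OF u(1)] rate_continuous_on[OF u(1)]) auto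
qed

text \<open>Integrating the \<open>u\<close>-frozen part by parts (via \<open>integral_Uy_orbit\<close>) turns the boundary
  term \<open>-U(u, 1)\<close> into \<open>-U(u, y(1))\<close>, which is close to \<open>-U(0, 0) < 0\<close>.\<close>

lemma dulac_derivative_eq:
  assumes u: "theta \<mu> \<epsilon> < u" "u \<le> 1"
  shows "dulac_derivative u
    = - U u (orbit u 1) / (u ^ \<mu> - \<epsilon>) + rate u * integral {u..1} (remainder_density u)"
proof -
  define Y where "Y = orbit u"
  define W where "W = remainder_density u"
  define F where "F x = Uy u (Y x) * (rate x * Y x)" for x
  have u0: "0 < u" and den_u: "0 < u ^ \<mu> - \<epsilon>"
    using u pos_above_theta denominator_pos by auto
  have Vu: "0 < V u" using V_pos[of u] u u0 by auto
  have cont_W: "continuous_on {u..1} W"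
    unfolding W_def by (rule continuous_on_remainder_density[OF u])
  have cont_F: "continuous_on {u..1} F"
    unfolding F_def Y_def using u0 u
    by (intro continuous_intros continuous_on_Uy_orbit[OF u(1)] continuous_on_orbit_end[OF u(1)]
        rate_continuous_on[OF u(1)]) auto
  have pointwise: "Uy x (Y x) * Y x * rate u / (x ^ \<mu> - \<epsilon>) = rate u * (W x + u / V u * F x)"
    if x: "x \<in> {u..1}" for x
  proof -
    have "0 < x" "0 < x ^ \<mu> - \<epsilon>"
      using x u pos_above_theta denominator_pos by auto
    moreover have "0 < V x" using V_pos[of x] x u0 by auto
    ultimately have "x * (Uy x (Y x) / V x) * (rate x * Y x) = Uy x (Y x) * Y x / (x ^ \<mu> - \<epsilon>)"
      by (simp add: rate_def field_simps)
    moreover have "W x + u / V u * F x = x * (Uy x (Y x) / V x) * (rate x * Y x)"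
      using Vu by (simp add: W_def Y_def F_def remainder_density_def field_simps)
    ultimately show ?thesis by simp
  qed
  have rate_u: "rate u * (u / V u) = 1 / (u ^ \<mu> - \<epsilon>)"
    using u0 Vu den_u by (simp add: rate_def)
  have "integral {u..1} (\<lambda>x. Uy x (Y x) * Y x * rate u / (x ^ \<mu> - \<epsilon>))
      = integral {u..1} (\<lambda>x. rate u * (W x + u / V u * F x))"
    by (rule integral_cong) (rule pointwise)
  also have "\<dots> = rate u * integral {u..1} (\<lambda>x. W x + u / V u * F x)"
    by simp
  also have "integral {u..1} (\<lambda>x. W x + u / V u * F x) = integral {u..1} W + integral {u..1} (\<lambda>x. u / V u * F x)"
    by (rule integral_add; intro integrable_continuous_interval continuous_intros cont_W cont_F)
  also have "rate u * (integral {u..1} W + integral {u..1} (\<lambda>x. u / V u * F x))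
      = rate u * integral {u..1} W + rate u * (u / V u) * integral {u..1} F"
    by (simp add: algebra_simps)
  also have "\<dots> = rate u * integral {u..1} W + (U u 1 - U u (Y 1)) / (u ^ \<mu> - \<epsilon>)"
    unfolding rate_u using integral_Uy_orbit[OF u] by (simp add: Y_def F_def[abs_def])
  finally show ?thesis
    by (simp add: dulac_derivative_def W_def Y_def diff_divide_distrib)
qed

lemma abs_remainder_density_le:
  assumes u: "theta \<mu> \<epsilon> < u" and x: "x \<in> {u..1}"
    and Q_bound: "\<And>x y. x \<in> {0..1} \<Longrightarrow> y \<in> {0..1} \<Longrightarrow> \<bar>Uy x y / V x\<bar> \<le> B"
    and \<delta>: "\<delta> > 0"
    and Q_close: "\<And>x x' y. x \<in> {0..1} \<Longrightarrow> x' \<in> {0..1} \<Longrightarrow> y \<in> {0..1} \<Longrightarrow> \<bar>x - x'\<bar> < \<delta> \<Longrightarrow>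
                    \<bar>Uy x y / V x - Uy x' y / V x'\<bar> \<le> \<eta>"
  shows "\<bar>remainder_density u x\<bar> \<le> (u * \<eta> + (B + 2 * B / \<delta>) * (x - u)) * (rate x * orbit u x)"
proof -
  have u0: "0 < u" using pos_above_theta[OF u] .
  have y: "orbit u x \<in> {0..1}" using orbit_mem_unit(1)[OF u] x by simp
  have diff: "\<bar>x * (Uy x (orbit u x) / V x) - u * (Uy u (orbit u x) / V u)\<bar>
      \<le> u * \<eta> + (B + 2 * B / \<delta>) * (x - u)"
    using Q_bound y Q_close y x u0 by (intro abs_weighted_diff_le[OF _ \<delta>]) auto
  have nonneg: "0 \<le> rate x * orbit u x"
    using rate_pos[of x] orbit_pos[of u x] x u by (simp add: less_imp_le)
  show ?thesis
    unfolding remainder_density_def abs_mult[of _ "rate x * orbit u x"] abs_of_nonneg[OF nonneg]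
    using diff nonneg by (rule mult_right_mono)
qed

lemma abs_integral_remainder_density_le:
  assumes u: "theta \<mu> \<epsilon> < u" "u < r" and r: "r \<le> 1" and k: "k \<ge> 2"
    and V_large: "\<And>t. t \<in> {u..r} \<Longrightarrow> real k * (r ^ \<mu> + \<bar>\<epsilon>\<bar>) \<le> V t"
    and Q_bound: "\<And>x y. x \<in> {0..1} \<Longrightarrow> y \<in> {0..1} \<Longrightarrow> \<bar>Uy x y / V x\<bar> \<le> B"
    and \<delta>: "\<delta> > 0"
    and Q_close: "\<And>x x' y. x \<in> {0..1} \<Longrightarrow> x' \<in> {0..1} \<Longrightarrow> y \<in> {0..1} \<Longrightarrow> \<bar>x - x'\<bar> < \<delta> \<Longrightarrow>
                    \<bar>Uy x y / V x - Uy x' y / V x'\<bar> \<le> \<eta>"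
  shows "\<bar>integral {u..1} (remainder_density u)\<bar>
    \<le> u * (\<eta> + (B + 2 * B / \<delta>) * (1 / (real k - 1) + u / r ^ k))"
proof -
  define B2 where "B2 = B + 2 * B / \<delta>"
  define Y where "Y = orbit u"
  have u0: "0 < u" and u1: "u \<le> 1" using pos_above_theta[OF u(1)] u r by auto
  have "\<bar>Uy 0 0 / V 0\<bar> \<le> B" by (rule Q_bound) auto
  then have "0 \<le> B" by (rule order_trans[OF abs_ge_zero])
  then have B2: "0 \<le> B2" using \<delta> by (simp add: B2_def)
  have \<eta>: "0 \<le> \<eta>" using Q_close[of 0 0 0] \<delta> by simp
  have Y1: "Y 1 \<in> {0..1}" using orbit_mem_unit(1)[OF u(1)] by (simp add: Y_def)
  have cont_rY: "continuous_on {u..1} (\<lambda>x. rate x * Y x)"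
    unfolding Y_def by (intro continuous_intros rate_continuous_on[OF u(1)] continuous_on_orbit_end[OF u(1)])
  note int = integrable_continuous_interval
  have bound: "\<bar>remainder_density u x\<bar> \<le> (u * \<eta> + B2 * (x - u)) * (rate x * Y x)"
    if "x \<in> {u..1}" for x
    unfolding B2_def Y_def using Q_bound \<delta> Q_close by (rule abs_remainder_density_le[OF u(1) that])
  have "norm (integral {u..1} (remainder_density u))
      \<le> integral {u..1} (\<lambda>x. (u * \<eta> + B2 * (x - u)) * (rate x * Y x))"
    by (rule integral_norm_bound_integral)
      (use bound continuous_on_remainder_density[OF u(1) u1] cont_rY in \<open>auto intro!: int continuous_intros\<close>)
  then have "\<bar>integral {u..1} (remainder_density u)\<bar>
      \<le> integral {u..1} (\<lambda>x. (u * \<eta> + B2 * (x - u)) * (rate x * Y x))"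
    by simp
  also have "\<dots> = u * \<eta> * integral {u..1} (\<lambda>x. rate x * Y x)
      + B2 * integral {u..1} (\<lambda>x. (x - u) * (rate x * Y x))"
    using cont_rY
    by (simp add: distrib_right integral_add int continuous_intros mult.assoc flip: integral_mult)
  also have "\<dots> = u * \<eta> * (1 - Y 1) + B2 * (integral {u..1} Y - (1 - u) * Y 1)"
    using integral_rate_orbit[OF u(1) u1] integral_moment_rate_orbit[OF u(1) u1] by (simp add: Y_def)
  also have "\<dots> \<le> u * \<eta> + B2 * integral {u..1} Y"
  proof -
    have "u * \<eta> * (1 - Y 1) \<le> u * \<eta>" using Y1 u0 \<eta> by (intro mult_left_le) auto
    moreover have "0 \<le> B2 * ((1 - u) * Y 1)" using Y1 u1 B2 by simp
    moreover have "B2 * (integral {u..1} Y - (1 - u) * Y 1) = B2 * integral {u..1} Y - B2 * ((1 - u) * Y 1)"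
      by (simp add: right_diff_distrib)
    ultimately show ?thesis by linarith
  qed
  also have "\<dots> \<le> u * \<eta> + B2 * (u / (real k - 1) + u * (u / r ^ k))"
    using orbit_decay_bounds(2)[OF u r k V_large] B2 by (simp add: Y_def mult_left_mono)
  also have "\<dots> = u * (\<eta> + B2 * (1 / (real k - 1) + u / r ^ k))" by (simp add: algebra_simps)
  finally show ?thesis by (simp add: B2_def)
qed

lemma dulac_derivative_le:
  assumes u: "theta \<mu> \<epsilon> < u" "u < r" and r: "r \<le> 1" and k: "k \<ge> 2"
    and V_large: "\<And>t. t \<in> {u..r} \<Longrightarrow> real k * (r ^ \<mu> + \<bar>\<epsilon>\<bar>) \<le> V t"
    and V_le: "V u \<le> V1"
    and Q_bound: "\<And>x y. x \<in> {0..1} \<Longrightarrow> y \<in> {0..1} \<Longrightarrow> \<bar>Uy x y / V x\<bar> \<le> B"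
    and \<delta>: "\<delta> > 0"
    and Q_close: "\<And>x x' y. x \<in> {0..1} \<Longrightarrow> x' \<in> {0..1} \<Longrightarrow> y \<in> {0..1} \<Longrightarrow> \<bar>x - x'\<bar> < \<delta> \<Longrightarrow>
                    \<bar>Uy x y / V x - Uy x' y / V x'\<bar> \<le> \<eta>"
    and U_low: "\<And>x y. x \<in> {0..1} \<Longrightarrow> y \<in> {0..1} \<Longrightarrow> x + y < \<rho> \<Longrightarrow> c0 \<le> U x y"
    and u_small: "u + (u + u / r ^ k) < \<rho>"
  shows "dulac_derivative u
    \<le> (- c0 + V1 * (\<eta> + (B + 2 * B / \<delta>) * (1 / (real k - 1) + u / r ^ k))) / (u ^ \<mu> - \<epsilon>)"
proof -
  define X where "X = \<eta> + (B + 2 * B / \<delta>) * (1 / (real k - 1) + u / r ^ k)"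
  define den where "den = u ^ \<mu> - \<epsilon>"
  have u0: "0 < u" and u1: "u \<le> 1" and den: "0 < den"
    using pos_above_theta[OF u(1)] denominator_pos[OF u(1)] u r by (auto simp: den_def)
  have "c0 \<le> U u (orbit u 1)"
    using orbit_decay_bounds(1)[OF u r k V_large] u_small u0 u1 orbit_mem_unit(1)[OF u(1)]
    by (intro U_low) auto
  then have boundary: "- U u (orbit u 1) / den \<le> - c0 / den"
    using den by (simp add: divide_right_mono)
  have rate_u: "0 \<le> rate u" "rate u \<le> V1 / (u * den)"
    using rate_pos[OF u(1) u1] V_le u0 den by (auto simp: rate_def den_def intro: divide_right_mono)
  have "rate u * integral {u..1} (remainder_density u) \<le> rate u * \<bar>integral {u..1} (remainder_density u)\<bar>"
    using rate_u by (intro mult_left_mono) auto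
  also have "\<dots> \<le> V1 / (u * den) * (u * X)"
    using abs_integral_remainder_density_le[OF u r k V_large Q_bound \<delta> Q_close] rate_u
    by (intro mult_mono) (auto simp: X_def)
  also have "\<dots> = V1 * X / den" using u0 by simp
  finally have "dulac_derivative u \<le> - c0 / den + V1 * X / den"
    using dulac_derivative_eq[OF u(1) u1] boundary by (simp add: den_def)
  then show ?thesis by (simp add: X_def den_def diff_divide_distrib)
qed

end

section \<open>Uniform estimates on compact parameter sets\<close>

lemma compact_pos_bounds:
  fixes f :: "'a::topological_space \<Rightarrow> real"
  assumes C: "compact C" and f: "continuous_on C f" and pos: "\<And>p. p \<in> C \<Longrightarrow> 0 < f p"
  obtains m M where "0 < m" "0 < M" "\<And>p. p \<in> C \<Longrightarrow> m \<le> f p \<and> f p \<le> M"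
proof (cases "C = {}")
  case True
  then show ?thesis by (intro that[of 1 1]) auto
next
  case False
  obtain pmin where pmin: "pmin \<in> C" "\<And>q. q \<in> C \<Longrightarrow> f pmin \<le> f q"
    using continuous_attains_inf[OF C False f] by blast
  obtain pmax where pmax: "pmax \<in> C" "\<And>q. q \<in> C \<Longrightarrow> f q \<le> f pmax"
    using continuous_attains_sup[OF C False f] by blast
  show ?thesis
    using pos[OF pmin(1)] pmin(2) pmax(2)[OF pmin(1)] pmax(2) by (intro that[of "f pmin" "f pmax"]) auto
qed

lemma uniformly_continuous_on_square_family:
  fixes f :: "(real \<times> real) \<times> 'a::metric_space \<Rightarrow> real"
  assumes K: "compact K" and f: "continuous_on (({0..1} \<times> {0..1}) \<times> K) f" and \<eta>: "\<eta> > 0"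
  obtains d where "d > 0"
    "\<And>a x y x' y'. a \<in> K \<Longrightarrow> x \<in> {0..1} \<Longrightarrow> y \<in> {0..1} \<Longrightarrow> x' \<in> {0..1} \<Longrightarrow> y' \<in> {0..1} \<Longrightarrow>
       \<bar>x - x'\<bar> + \<bar>y - y'\<bar> < d \<Longrightarrow> \<bar>f ((x, y), a) - f ((x', y'), a)\<bar> < \<eta>"
proof -
  have "uniformly_continuous_on (({0..1} \<times> {0..1}) \<times> K) f"
    using f K by (intro compact_uniformly_continuous compact_Times) auto
  then obtain d where d: "d > 0" and dh: "\<And>p p'. p \<in> ({0..1} \<times> {0..1}) \<times> K \<Longrightarrow>
      p' \<in> ({0..1} \<times> {0..1}) \<times> K \<Longrightarrow> dist p' p < d \<Longrightarrow> dist (f p') (f p) < \<eta>"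
    using \<eta> unfolding uniformly_continuous_on_def by metis
  show ?thesis
  proof (rule that[OF d])
    fix a and x y x' y' :: real assume a: "a \<in> K" and xy: "x \<in> {0..1}" "y \<in> {0..1}" "x' \<in> {0..1}" "y' \<in> {0..1}"
      and close: "\<bar>x - x'\<bar> + \<bar>y - y'\<bar> < d"
    have "dist ((x, y), a) ((x', y'), a) \<le> \<bar>x - x'\<bar> + \<bar>y - y'\<bar>"
      by (simp add: dist_Pair_Pair dist_real_def sqrt_sum_squares_le_sum_abs)
    then show "\<bar>f ((x, y), a) - f ((x', y'), a)\<bar> < \<eta>"
      using dh[of "((x', y'), a)" "((x, y), a)"] a xy close by (simp add: dist_real_def)
  qed
qed

lemma compact_family_constants:
  fixes K :: "'a::metric_space set" and U Uy :: "'a \<Rightarrow> real \<Rightarrow> real \<Rightarrow> real" and V :: "'a \<Rightarrow> real \<Rightarrow> real"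
  assumes K: "compact K"
    and U_cont: "continuous_on (({0..1} \<times> {0..1}) \<times> K) (\<lambda>((x, y), a). U a x y)"
    and Uy_cont: "continuous_on (({0..1} \<times> {0..1}) \<times> K) (\<lambda>((x, y), a). Uy a x y)"
    and V_cont: "continuous_on ({0..1} \<times> K) (\<lambda>(x, a). V a x)"
    and V_pos: "\<And>a x. a \<in> K \<Longrightarrow> x \<in> {0..1} \<Longrightarrow> 0 < V a x"
    and U_pos: "\<And>a. a \<in> K \<Longrightarrow> 0 < U a 0 0"
  obtains v0 V1 c0 \<rho> B where "0 < v0" "0 < V1" "0 < c0" "0 < \<rho>" "0 \<le> B"
    and "\<And>a x. a \<in> K \<Longrightarrow> x \<in> {0..1} \<Longrightarrow> v0 \<le> V a x \<and> V a x \<le> V1"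
    and "\<And>a x y. a \<in> K \<Longrightarrow> x \<in> {0..1} \<Longrightarrow> y \<in> {0..1} \<Longrightarrow> x + y < \<rho> \<Longrightarrow> c0 \<le> U a x y"
    and "\<And>a x y. a \<in> K \<Longrightarrow> x \<in> {0..1} \<Longrightarrow> y \<in> {0..1} \<Longrightarrow> \<bar>Uy a x y / V a x\<bar> \<le> B"
    and "\<And>\<eta>. 0 < \<eta> \<Longrightarrow> \<exists>\<delta>>0. \<forall>a x x' y. a \<in> K \<and> x \<in> {0..1} \<and> x' \<in> {0..1} \<and> y \<in> {0..1}
           \<and> \<bar>x - x'\<bar> < \<delta> \<longrightarrow> \<bar>Uy a x y / V a x - Uy a x' y / V a x'\<bar> \<le> \<eta>"
proof -
  define C where "C = ({0..1::real} \<times> {0..1::real}) \<times> K"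
  have C: "compact C" unfolding C_def using K by (intro compact_Times) auto
  obtain v0 V1 where v0: "0 < v0" "0 < V1"
    and Vb: "\<And>p. p \<in> {0..1} \<times> K \<Longrightarrow> v0 \<le> (\<lambda>(x, a). V a x) p \<and> (\<lambda>(x, a). V a x) p \<le> V1"
    by (rule compact_pos_bounds[OF compact_Times[OF compact_Icc K] V_cont]) (use V_pos in auto)
  have V_bounds: "v0 \<le> V a x \<and> V a x \<le> V1" if "a \<in> K" "x \<in> {0..1}" for a x
    using Vb[of "(x, a)"] that by simp
  have "continuous_on K (\<lambda>a. (\<lambda>((x, y), a). U a x y) ((0, 0), a))"
    by (rule continuous_on_compose2[OF U_cont]) (auto intro!: continuous_intros)
  then obtain m M' where m: "0 < m" "0 < M'" and mb: "\<And>a. a \<in> K \<Longrightarrow> m \<le> U a 0 0 \<and> U a 0 0 \<le> M'"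
    by (rule compact_pos_bounds[OF K]) (use U_pos in auto)
  obtain \<rho> where \<rho>: "0 < \<rho>" and U_close: "\<And>a x y x' y'. a \<in> K \<Longrightarrow> x \<in> {0..1} \<Longrightarrow> y \<in> {0..1} \<Longrightarrow>
      x' \<in> {0..1} \<Longrightarrow> y' \<in> {0..1} \<Longrightarrow> \<bar>x - x'\<bar> + \<bar>y - y'\<bar> < \<rho> \<Longrightarrow>
      \<bar>(\<lambda>((x, y), a). U a x y) ((x, y), a) - (\<lambda>((x, y), a). U a x y) ((x', y'), a)\<bar> < m / 2"
    by (rule uniformly_continuous_on_square_family[OF K U_cont, where \<eta> = "m / 2"]) (use m in auto)
  define Q where "Q = (\<lambda>((x, y), a). Uy a x y / V a x)"
  have "continuous_on C (\<lambda>p. (\<lambda>(x, a). V a x) (fst (fst p), snd p))"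
    by (rule continuous_on_compose2[OF V_cont]) (auto simp: C_def intro!: continuous_intros)
  then have "continuous_on C (\<lambda>p. V (snd p) (fst (fst p)))" by simp
  moreover have "V (snd p) (fst (fst p)) \<noteq> 0" if "p \<in> C" for p
    using V_pos[of "snd p" "fst (fst p)"] that by (auto simp: C_def)
  ultimately have Q_cont: "continuous_on C Q"
    using Uy_cont unfolding Q_def C_def case_prod_beta by (intro continuous_intros) auto
  obtain B where B: "\<And>p. p \<in> C \<Longrightarrow> norm (Q p) \<le> B"
    using compact_imp_bounded[OF compact_continuous_image[OF Q_cont C]] unfolding bounded_iff by blast
  show ?thesis
  proof (rule that[OF v0 _ \<rho> _ V_bounds])
    show "0 < m / 2" "0 \<le> max B 0" using m by auto
    show "m / 2 \<le> U a x y" if "a \<in> K" "x \<in> {0..1}" "y \<in> {0..1}" "x + y < \<rho>" for a x y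
    proof -
      have "\<bar>U a x y - U a 0 0\<bar> < m / 2" using U_close[of a x y 0 0] that by simp
      then show ?thesis using mb[of a] that by linarith
    qed
    show "\<bar>Uy a x y / V a x\<bar> \<le> max B 0" if "a \<in> K" "x \<in> {0..1}" "y \<in> {0..1}" for a x y
      using B[of "((x, y), a)"] that by (simp add: C_def Q_def)
    show "\<exists>\<delta>>0. \<forall>a x x' y. a \<in> K \<and> x \<in> {0..1} \<and> x' \<in> {0..1} \<and> y \<in> {0..1} \<and> \<bar>x - x'\<bar> < \<delta> \<longrightarrow>
        \<bar>Uy a x y / V a x - Uy a x' y / V a x'\<bar> \<le> \<eta>" if \<eta>: "0 < \<eta>" for \<eta>
    proof -
      obtain d where "0 < d" and d: "\<And>a x y x' y'. a \<in> K \<Longrightarrow> x \<in> {0..1} \<Longrightarrow> y \<in> {0..1} \<Longrightarrow>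
          x' \<in> {0..1} \<Longrightarrow> y' \<in> {0..1} \<Longrightarrow> \<bar>x - x'\<bar> + \<bar>y - y'\<bar> < d \<Longrightarrow> \<bar>Q ((x, y), a) - Q ((x', y'), a)\<bar> < \<eta>"
        using uniformly_continuous_on_square_family[OF K Q_cont[unfolded C_def] \<eta>] by blast
      show ?thesis
      proof (intro exI[of _ d] conjI allI impI \<open>0 < d\<close>)
        fix a and x x' y :: real assume H: "a \<in> K \<and> x \<in> {0..1} \<and> x' \<in> {0..1} \<and> y \<in> {0..1} \<and> \<bar>x - x'\<bar> < d"
        then have "\<bar>Q ((x, y), a) - Q ((x', y), a)\<bar> < \<eta>" using d[of a x y x' y] by simp
        then show "\<bar>Uy a x y / V a x - Uy a x' y / V a x'\<bar> \<le> \<eta>" by (simp add: Q_def)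
      qed
    qed
  qed
qed

lemma exists_nat_ratio_le:
  fixes C e :: real
  assumes "0 \<le> C" "0 < e"
  obtains k :: nat where "k \<ge> 2" "C / (real k - 1) \<le> e"
proof
  define k where "k = nat \<lceil>C / e\<rceil> + 2"
  show "k \<ge> 2" by (simp add: k_def)
  have k1: "C / e \<le> real k - 1" unfolding k_def by linarith
  moreover have "0 < real k - 1" by (simp add: k_def)
  ultimately have "C \<le> e * (real k - 1)" using assms by (simp add: pos_divide_le_eq mult.commute)
  then show "C / (real k - 1) \<le> e"
    using \<open>0 < real k - 1\<close> by (simp add: divide_le_eq mult.commute)
qed

lemma divide_less_of_small_denominator:
  fixes N d M a :: real
  assumes "0 < a" "N \<le> - a" "0 < d" "d \<le> a / (\<bar>M\<bar> + 1)"
  shows "N / d < M"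
proof -
  have "N / d \<le> - a / d" using assms by (intro divide_right_mono) auto
  also have "\<dots> \<le> - a / (a / (\<bar>M\<bar> + 1))"
    using assms by (intro divide_left_mono_neg) (auto intro: mult_pos_pos)
  also have "\<dots> = - (\<bar>M\<bar> + 1)" using assms by (simp add: field_simps)
  also have "\<dots> < M" by linarith
  finally show ?thesis .
qed

text \<open>The numerator of the bound in \<open>dulac_derivative_le\<close> stays below \<open>-c\<^sub>0 / 2\<close>, while the
  denominator \<open>u\<^sup>\<mu> - \<epsilon>\<close> tends to \<open>0\<close>.\<close>

lemma dulac_parameters:
  fixes v0 V1 B2 c0 \<rho> M :: real
  assumes mu: "\<mu> \<ge> 1" and pos: "0 < v0" "0 < V1" "0 \<le> B2" "0 < c0" "0 < \<rho>"
  obtains k :: nat and r \<delta> where "k \<ge> 2" "0 < r" "r \<le> 1" "0 < \<delta>"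
    and "\<And>s \<epsilon> u. 0 < s \<Longrightarrow> s < \<delta> \<Longrightarrow> \<bar>\<epsilon>\<bar> < \<delta> \<Longrightarrow> u = s + theta \<mu> \<epsilon> \<Longrightarrow>
           u < r \<and> real k * (r ^ \<mu> + \<bar>\<epsilon>\<bar>) \<le> v0 \<and> u + (u + u / r ^ k) < \<rho>
           \<and> (- c0 + V1 * (c0 / (6 * V1) + B2 * (1 / (real k - 1) + u / r ^ k))) / (u ^ \<mu> - \<epsilon>) < M"
proof -
  obtain k :: nat where k: "k \<ge> 2" and kB: "V1 * B2 / (real k - 1) \<le> c0 / 6"
    using exists_nat_ratio_le[of "V1 * B2" "c0 / 6"] pos by auto
  define r where "r = min 1 (v0 / (2 * real k))"
  have r: "0 < r" "r \<le> 1" using pos k by (auto simp: r_def)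
  have r\<mu>: "r ^ \<mu> \<le> v0 / (2 * real k)"
    using power_decreasing[of 1 \<mu> r] r mu by (simp add: r_def)
  define a where "a = c0 / (4 * (\<bar>M\<bar> + 1))"
  define ub where "ub = min (min (r / 2) (\<rho> * r ^ k / 4)) (min (c0 * r ^ k / (6 * (V1 * B2 + 1))) a)"
  have ub: "0 < ub" using r pos by (simp add: ub_def a_def add_nonneg_pos)
  define \<delta> where "\<delta> = min (min (ub / 2) (min (v0 / (2 * real k)) a)) ((ub / 2) ^ \<mu>)"
  show ?thesis
  proof (rule that[OF k r])
    show "0 < \<delta>" using ub pos k by (simp add: \<delta>_def a_def)
    fix s \<epsilon> u assume s: "0 < s" "s < \<delta>" and \<epsilon>: "\<bar>\<epsilon>\<bar> < \<delta>" and u: "u = s + theta \<mu> \<epsilon>"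
    have "theta \<mu> \<epsilon> < ub / 2" using \<epsilon> ub by (intro theta_less[OF mu]) (auto simp: \<delta>_def)
    then have u_ub: "u < ub" and u0: "0 < u" using s u theta_nonneg[of \<mu> \<epsilon>] by (auto simp: \<delta>_def)
    have u_r: "u < r" using u_ub r by (simp add: ub_def)
    have "\<bar>\<epsilon>\<bar> \<le> v0 / (2 * real k)" "\<bar>\<epsilon>\<bar> \<le> a" using \<epsilon> by (auto simp: \<delta>_def)
    then have "real k * (r ^ \<mu> + \<bar>\<epsilon>\<bar>) \<le> v0" using r\<mu> k by (simp add: field_simps)
    moreover have "u + (u + u / r ^ k) < \<rho>"
    proof -
      have rk: "0 < r ^ k" "r ^ k \<le> 1" using r by (auto simp: power_le_one)
      have u_le: "u \<le> \<rho> * r ^ k / 4" using u_ub by (simp add: ub_def)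
      have "\<rho> * r ^ k \<le> \<rho>" using rk pos by (simp add: mult_left_le)
      then have "u \<le> \<rho> / 4" using u_le by linarith
      moreover have "u / r ^ k \<le> \<rho> / 4" using u_le rk by (simp add: pos_divide_le_eq)
      ultimately show ?thesis using pos by linarith
    qed
    moreover have "(- c0 + V1 * (c0 / (6 * V1) + B2 * (1 / (real k - 1) + u / r ^ k))) / (u ^ \<mu> - \<epsilon>) < M"
    proof (rule divide_less_of_small_denominator)
      have "u / r ^ k \<le> c0 / (6 * (V1 * B2 + 1))"
        using u_ub r by (simp add: ub_def pos_divide_le_eq mult.commute)
      then have "V1 * B2 * (u / r ^ k) \<le> V1 * B2 * (c0 / (6 * (V1 * B2 + 1)))"
        using pos by (intro mult_left_mono) auto
      also have "\<dots> = c0 / 6 * (V1 * B2 / (V1 * B2 + 1))" by simp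
      also have "\<dots> \<le> c0 / 6"
        using pos by (intro mult_left_le) (auto simp: divide_le_eq_1 add_nonneg_pos)
      finally have "V1 * B2 * (u / r ^ k) \<le> c0 / 6" .
      moreover have "V1 * (c0 / (6 * V1) + B2 * (1 / (real k - 1) + u / r ^ k))
          = c0 / 6 + V1 * B2 / (real k - 1) + V1 * B2 * (u / r ^ k)"
        using pos by (simp add: ring_distribs)
      ultimately show "- c0 + V1 * (c0 / (6 * V1) + B2 * (1 / (real k - 1) + u / r ^ k)) \<le> - (c0 / 2)"
        using kB by linarith
      show "0 < u ^ \<mu> - \<epsilon>" using power_diff_pos_above_theta[OF mu] s u by simp
      have "u ^ \<mu> \<le> u" using power_decreasing[of 1 \<mu> u] u0 u_r r mu by simp
      moreover have "u \<le> a" using u_ub by (simp add: ub_def)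
      ultimately have "u ^ \<mu> - \<epsilon> \<le> 2 * a" using \<open>\<bar>\<epsilon>\<bar> \<le> a\<close> by linarith
      moreover have "2 * a = c0 / 2 / (\<bar>M\<bar> + 1)"
        unfolding a_def using abs_ge_zero[of M] by (simp add: field_simps)
      ultimately show "u ^ \<mu> - \<epsilon> \<le> c0 / 2 / (\<bar>M\<bar> + 1)" by simp
    qed (use pos in simp)
    ultimately show "u < r \<and> real k * (r ^ \<mu> + \<bar>\<epsilon>\<bar>) \<le> v0 \<and> u + (u + u / r ^ k) < \<rho>
        \<and> (- c0 + V1 * (c0 / (6 * V1) + B2 * (1 / (real k - 1) + u / r ^ k))) / (u ^ \<mu> - \<epsilon>) < M"
      using u_r by blast
  qed
qed

lemma compact_family_dulac_time_derivative_less: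
  fixes K :: "'a::metric_space set" and U Uy :: "'a \<Rightarrow> real \<Rightarrow> real \<Rightarrow> real" and V :: "'a \<Rightarrow> real \<Rightarrow> real"
  assumes mu: "\<mu> \<ge> 1" and K: "compact K"
    and field: "\<And>a. a \<in> K \<Longrightarrow> dulac_field \<mu> (U a) (Uy a) (V a)"
    and U_cont: "continuous_on (({0..1} \<times> {0..1}) \<times> K) (\<lambda>((x, y), a). U a x y)"
    and Uy_cont: "continuous_on (({0..1} \<times> {0..1}) \<times> K) (\<lambda>((x, y), a). Uy a x y)"
    and V_cont: "continuous_on ({0..1} \<times> K) (\<lambda>(x, a). V a x)"
    and U_pos: "\<And>a. a \<in> K \<Longrightarrow> 0 < U a 0 0"
  shows "\<exists>\<delta>>0. \<forall>s \<epsilon> a. 0 < s \<and> s < \<delta> \<and> \<bar>\<epsilon>\<bar> < \<delta> \<and> a \<in> K \<longrightarrow>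
           (\<exists>D. ((\<lambda>\<sigma>. dulac_time \<mu> (U a) (V a) \<epsilon> \<sigma>) has_real_derivative D) (at s) \<and> D < M)"
proof -
  have V_pos: "\<And>a x. a \<in> K \<Longrightarrow> x \<in> {0..1} \<Longrightarrow> 0 < V a x"
    using field dulac_field.V_pos by fastforce
  obtain v0 V1 c0 \<rho> B where pos: "0 < v0" "0 < V1" "0 < c0" "0 < \<rho>" "0 \<le> B"
    and V_bounds: "\<And>a x. a \<in> K \<Longrightarrow> x \<in> {0..1} \<Longrightarrow> v0 \<le> V a x \<and> V a x \<le> V1"
    and U_low: "\<And>a x y. a \<in> K \<Longrightarrow> x \<in> {0..1} \<Longrightarrow> y \<in> {0..1} \<Longrightarrow> x + y < \<rho> \<Longrightarrow> c0 \<le> U a x y"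
    and Q_bound: "\<And>a x y. a \<in> K \<Longrightarrow> x \<in> {0..1} \<Longrightarrow> y \<in> {0..1} \<Longrightarrow> \<bar>Uy a x y / V a x\<bar> \<le> B"
    and Q_close: "\<And>\<eta>. 0 < \<eta> \<Longrightarrow> \<exists>\<delta>>0. \<forall>a x x' y. a \<in> K \<and> x \<in> {0..1} \<and> x' \<in> {0..1} \<and> y \<in> {0..1}
           \<and> \<bar>x - x'\<bar> < \<delta> \<longrightarrow> \<bar>Uy a x y / V a x - Uy a x' y / V a x'\<bar> \<le> \<eta>"
    using compact_family_constants[OF K U_cont Uy_cont V_cont V_pos U_pos] by blast
  obtain \<delta>1 where \<delta>1: "\<delta>1 > 0" and Q_close': "\<And>a x x' y. a \<in> K \<Longrightarrow> x \<in> {0..1} \<Longrightarrow> x' \<in> {0..1} \<Longrightarrow>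
      y \<in> {0..1} \<Longrightarrow> \<bar>x - x'\<bar> < \<delta>1 \<Longrightarrow> \<bar>Uy a x y / V a x - Uy a x' y / V a x'\<bar> \<le> c0 / (6 * V1)"
    using Q_close[of "c0 / (6 * V1)"] pos by auto
  obtain k r \<delta> where k: "k \<ge> 2" and r: "0 < r" "r \<le> 1" and \<delta>: "0 < \<delta>"
    and small: "\<And>s \<epsilon> u. 0 < s \<Longrightarrow> s < \<delta> \<Longrightarrow> \<bar>\<epsilon>\<bar> < \<delta> \<Longrightarrow> u = s + theta \<mu> \<epsilon> \<Longrightarrow>
           u < r \<and> real k * (r ^ \<mu> + \<bar>\<epsilon>\<bar>) \<le> v0 \<and> u + (u + u / r ^ k) < \<rho>
           \<and> (- c0 + V1 * (c0 / (6 * V1) + (B + 2 * B / \<delta>1) * (1 / (real k - 1) + u / r ^ k))) / (u ^ \<mu> - \<epsilon>) < M"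
    using dulac_parameters[OF mu pos(1,2) _ pos(3,4), of "B + 2 * B / \<delta>1" M] pos(5) \<delta>1 by auto
  show "\<exists>\<delta>>0. \<forall>s \<epsilon> a. 0 < s \<and> s < \<delta> \<and> \<bar>\<epsilon>\<bar> < \<delta> \<and> a \<in> K \<longrightarrow>
      (\<exists>D. ((\<lambda>\<sigma>. dulac_time \<mu> (U a) (V a) \<epsilon> \<sigma>) has_real_derivative D) (at s) \<and> D < M)"
  proof (rule exI[of _ \<delta>], intro conjI allI impI \<delta>)
    fix s \<epsilon> a assume H: "0 < s \<and> s < \<delta> \<and> \<bar>\<epsilon>\<bar> < \<delta> \<and> a \<in> K"
    interpret dulac_field \<mu> \<epsilon> "U a" "Uy a" "V a" using field H by auto
    define u where "u = s + theta \<mu> \<epsilon>"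
    have u: "theta \<mu> \<epsilon> < u" "0 < u" using H theta_nonneg[of \<mu> \<epsilon>] by (auto simp: u_def)
    have u_r: "u < r" and kr: "real k * (r ^ \<mu> + \<bar>\<epsilon>\<bar>) \<le> v0" and u_\<rho>: "u + (u + u / r ^ k) < \<rho>"
      and less: "(- c0 + V1 * (c0 / (6 * V1) + (B + 2 * B / \<delta>1) * (1 / (real k - 1) + u / r ^ k)))
                 / (u ^ \<mu> - \<epsilon>) < M"
      using small[OF _ _ _ u_def] H by auto
    have "dulac_derivative u \<le> (- c0 + V1 * (c0 / (6 * V1) + (B + 2 * B / \<delta>1) * (1 / (real k - 1) + u / r ^ k)))
        / (u ^ \<mu> - \<epsilon>)"
    proof (rule dulac_derivative_le[OF u(1) u_r r(2) k _ _ _ \<delta>1 _ _ u_\<rho>])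
      show "real k * (r ^ \<mu> + \<bar>\<epsilon>\<bar>) \<le> V a t" if "t \<in> {u..r}" for t
        using kr V_bounds[of a t] H that u(2) r by auto
      show "V a u \<le> V1" using V_bounds[of a u] H u(2) u_r r by auto
    qed (use H Q_bound Q_close' U_low in auto)
    then show "\<exists>D. ((\<lambda>\<sigma>. dulac_time \<mu> (U a) (V a) \<epsilon> \<sigma>) has_real_derivative D) (at s) \<and> D < M"
      using dulac_time_has_derivative[of s] H u_r r less by (auto simp: u_def)
  qed
qed

lemma analytic_family_dulac_field:
  fixes A :: "(real ^ 'n) set"
    and U :: "real ^ 'n \<Rightarrow> real \<Rightarrow> real \<Rightarrow> real" and V :: "real ^ 'n \<Rightarrow> real \<Rightarrow> real"
  assumes mu: "\<mu> \<ge> 1"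
    and U_an: "real_analytic_on (\<lambda>((x, y), a). U a x y) (({-1..1} \<times> {-1..1}) \<times> A)"
    and V_an: "real_analytic_on (\<lambda>(x, a). V a x) ({-1..1} \<times> A)"
    and V_pos: "\<forall>a\<in>A. \<forall>x\<in>{-1..1}. V a x > 0"
  obtains Uy where "continuous_on (({-1..1} \<times> {-1..1}) \<times> A) (\<lambda>((x, y), a). Uy a x y)"
    and "\<And>a. a \<in> A \<Longrightarrow> dulac_field \<mu> (U a) (Uy a) (V a)"
proof -
  define S where "S = ({-1..1::real} \<times> {-1..1::real}) \<times> A"
  define F where "F = (\<lambda>((x, y), a). U a x y :: real)"
  define e :: "(real \<times> real) \<times> (real ^ 'n)" where "e = ((0, 1), 0)"
  define Uy where "Uy a x y = partial_deriv F e ((x, y), a)" for a x y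
  have e: "e \<in> Basis" by (simp add: e_def Basis_prod_def)
  have F: "real_analytic_on F S" using U_an by (simp add: F_def S_def)
  have Uy_cont: "continuous_on S (\<lambda>((x, y), a). Uy a x y)"
    using continuous_on_partial_deriv[OF F e] by (simp add: Uy_def case_prod_beta)
  have "dulac_field \<mu> (U a) (Uy a) (V a)" if a: "a \<in> A" for a
  proof
    show "continuous_on ({-1..1} \<times> {-1..1}) (\<lambda>(x, y). U a x y)"
      using continuous_on_slice[OF real_analytic_on_imp_continuous_on[OF F, unfolded S_def] a]
      by (simp add: S_def F_def case_prod_beta)
    show "continuous_on ({-1..1} \<times> {-1..1}) (\<lambda>(x, y). Uy a x y)"
      using continuous_on_slice[OF Uy_cont[unfolded S_def] a] by (simp add: case_prod_beta)
    show "continuous_on {-1..1} (V a)"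
      using continuous_on_slice[OF real_analytic_on_imp_continuous_on[OF V_an] a] by simp
    fix x y :: real assume xy: "x \<in> {-1..1}" "y \<in> {-1..1}"
    have "((\<lambda>t. F (((x, y), a) + t *\<^sub>R e)) has_real_derivative Uy a x y) (at 0)"
      unfolding Uy_def using xy a by (intro real_analytic_on_partial_deriv(3)[OF F e]) (auto simp: S_def)
    then have "((\<lambda>t. U a x (t + y)) has_real_derivative Uy a x y) (at 0)"
      by (simp add: F_def e_def add.commute)
    then show "(U a x has_real_derivative Uy a x y) (at y)"
      using DERIV_shift[of "U a x" "Uy a x y" 0 y] by simp
  qed (use mu V_pos a in auto)
  with Uy_cont show ?thesis unfolding S_def by (intro that) auto
qed

theorem theoremA:
  fixes \<mu> :: nat
    and A :: "(real ^ 'n) set"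
    and U :: "real ^ 'n \<Rightarrow> real \<Rightarrow> real \<Rightarrow> real"
    and V :: "real ^ 'n \<Rightarrow> real \<Rightarrow> real"
  assumes mu: "\<mu> \<ge> 1"
    and A_open: "open A"
    and U_an: "real_analytic_on (\<lambda>((x, y), a). U a x y) (({-1..1} \<times> {-1..1}) \<times> A)"
    and U_pos: "\<forall>a\<in>A. U a 0 0 > 0"
    and U_taylor: "\<forall>a\<in>A. \<exists>c :: nat \<Rightarrow> nat \<Rightarrow> real.
        (\<exists>r>0. \<forall>x y. \<bar>x\<bar> < r \<and> \<bar>y\<bar> < r \<longrightarrow>
            ((\<lambda>(i, j). c i j * x ^ i * y ^ j) has_sum U a x y) UNIV)
        \<and> (\<forall>x\<in>{-1..1}. \<forall>y\<in>{-1..1}. (\<lambda>(i, j). \<bar>c i j * x ^ i * y ^ j\<bar>) summable_on UNIV)"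
    and V_an: "real_analytic_on (\<lambda>(x, a). V a x) ({-1..1} \<times> A)"
    and V_pos: "\<forall>a\<in>A. \<forall>x\<in>{-1..1}. V a x > 0"
  shows "\<forall>K. compact K \<and> K \<subseteq> A \<longrightarrow>
           (\<forall>M::real. \<exists>\<delta>>0. \<forall>s \<epsilon> a. 0 < s \<and> s < \<delta> \<and> \<bar>\<epsilon>\<bar> < \<delta> \<and> a \<in> K \<longrightarrow>
              (\<exists>D. ((\<lambda>\<sigma>. dulac_time \<mu> (U a) (V a) \<epsilon> \<sigma>) has_real_derivative D) (at s) \<and> D < M))"
proof (intro allI impI)
  fix K :: "(real ^ 'n) set" and M :: real
  assume "compact K \<and> K \<subseteq> A"
  then have K: "compact K" "K \<subseteq> A" by auto
  obtain Uy where Uy_cont: "continuous_on (({-1..1} \<times> {-1..1}) \<times> A) (\<lambda>((x, y), a). Uy a x y)"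
    and field: "\<And>a. a \<in> A \<Longrightarrow> dulac_field \<mu> (U a) (Uy a) (V a)"
    using analytic_family_dulac_field[OF mu U_an V_an V_pos] by blast
  have unit: "{0..1::real} \<subseteq> {-1..1}" by auto
  show "\<exists>\<delta>>0. \<forall>s \<epsilon> a. 0 < s \<and> s < \<delta> \<and> \<bar>\<epsilon>\<bar> < \<delta> \<and> a \<in> K \<longrightarrow>
      (\<exists>D. ((\<lambda>\<sigma>. dulac_time \<mu> (U a) (V a) \<epsilon> \<sigma>) has_real_derivative D) (at s) \<and> D < M)"
  proof (rule compact_family_dulac_time_derivative_less[OF mu K(1)])
    show "continuous_on (({0..1} \<times> {0..1}) \<times> K) (\<lambda>((x, y), a). U a x y)"
      "continuous_on (({0..1} \<times> {0..1}) \<times> K) (\<lambda>((x, y), a). Uy a x y)"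
      using real_analytic_on_imp_continuous_on[OF U_an] Uy_cont unit K(2)
      by (auto elim!: continuous_on_subset intro!: Sigma_mono)
    show "continuous_on ({0..1} \<times> K) (\<lambda>(x, a). V a x)"
      using real_analytic_on_imp_continuous_on[OF V_an] unit K(2)
      by (auto elim!: continuous_on_subset intro!: Sigma_mono)
  qed (use field U_pos K(2) in auto)
qed

end
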